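(* In the two-unicast setting, suppose $k_{1-2}+k_{2-1}\ge\min(k_{12-1},k_{12-2})$ and $k_{1-2}\le k_{1-1}$. Set $R_1^*=k_{1-2}$ and $R_2^*=\min(k_{12-1},k_{12-2})-k_{1-2}$. Let the field $GF(q)$ and the local coding coefficients at the non-source nodes be fixed so that $\mathrm{rank}(H_{ij})=k_{j-i}$ and $\mathrm{rank}([H_{i1}~H_{i2}])=k_{12-i}$ for $i,j\in\{1,2\}$, and let $M_1$ ($k_{1-12}\times R_1^*$) and $M_2$ ($k_{2-12}\times R_2^*$) be full column rank source encoding matrices such that $[H_{i1}M_1~~H_{i2}M_2]$ has full column rank $R_1^*+R_2^*$ for $i=1,2$ (i.e., both terminals can decode both sources at rates $(R_1^*,R_2^* )$). Then every pair of nonnegative integers $(R_1,R_2)$ with $$R_1\le k_{1-1},\qquad R_2\le \min(k_{12-1},k_{12-2})-k_{1-2},\qquad R_1+R_2\le \mathrm{rank}([H_{11}~~H_{12}M_2])$$ is achievable.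
   Context: $G=(V,E)$ is a directed acyclic network with unit-capacity edges (each carrying one symbol of $GF(q)$ per use), sources $s_1,s_2$ (no incoming edges), terminals $t_1,t_2$ (no outgoing edges); $t_i$ wants the message of $s_i$. $k_{N_1-N_2}$ is the min-cut from $\{s_i:i\in N_1\}$ to $\{t_j:j\in N_2\}$. W.l.o.g. $s_i$ has exactly $k_{i-12}$ outgoing edges and $t_i$ has exactly $k_{12-i}$ incoming edges. For a linear network code over $GF(q)$ with fixed local coefficients at non-source nodes, $H_{ij}$ is the $k_{12-i}\times k_{j-12}$ matrix such that the vector of symbols on the incoming edges of $t_i$ equals $H_{i1}Y_1+H_{i2}Y_2$, where $Y_j$ is the vector of symbols on the outgoing edges of $s_j$; the source encoding is $Y_j=M_jU_j$ with $U_j$ the message vector of $s_j$. $(R_1,R_2)$ is achievable if for some finite field $GF(q)$ there is a linear network code such that, when $s_i$ observes $R_i$ independent symbols of $GF(q)$, $t_1$ uniquely recovers $s_1$'s message and $t_2$ uniquely recovers $s_2$'s message. *)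

theory Defs
  imports "HOL-Algebra.Ring"
begin

definition In_edges :: "'e set \<Rightarrow> ('e \<Rightarrow> 'v) \<Rightarrow> 'v \<Rightarrow> 'e set" where
  "In_edges E head v = {e \<in> E. head e = v}"

definition Out_edges :: "'e set \<Rightarrow> ('e \<Rightarrow> 'v) \<Rightarrow> 'v \<Rightarrow> 'e set" where
  "Out_edges E tail v = {e \<in> E. tail e = v}"

definition is_path :: "'e set \<Rightarrow> ('e \<Rightarrow> 'v) \<Rightarrow> ('e \<Rightarrow> 'v) \<Rightarrow> 'v \<Rightarrow> 'v \<Rightarrow> 'e list \<Rightarrow> bool" where
  "is_path E tail head u w p \<longleftrightarrow>
     p \<noteq> [] \<and> set p \<subseteq> E \<and> tail (p ! 0) = u \<and> head (last p) = w \<and>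
     (\<forall>i. Suc i < length p \<longrightarrow> head (p ! i) = tail (p ! Suc i))"

definition acyclic_net :: "'e set \<Rightarrow> ('e \<Rightarrow> 'v) \<Rightarrow> ('e \<Rightarrow> 'v) \<Rightarrow> bool" where
  "acyclic_net E tail head \<longleftrightarrow> (\<forall>v p. \<not> is_path E tail head v v p)"

definition separates :: "'e set \<Rightarrow> ('e \<Rightarrow> 'v) \<Rightarrow> ('e \<Rightarrow> 'v) \<Rightarrow> 'e set \<Rightarrow> 'v set \<Rightarrow> 'v set \<Rightarrow> bool" where
  "separates E tail head C S T \<longleftrightarrow>
     (\<forall>s\<in>S. \<forall>t\<in>T. \<forall>p. is_path E tail head s t p \<longrightarrow> set p \<inter> C \<noteq> {})"

text \<open>min-cut k_{N1-N2} (unit capacity edges): least number of edges whose removal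
  disconnects the sources S from the terminals T.\<close>
definition min_cut :: "'e set \<Rightarrow> ('e \<Rightarrow> 'v) \<Rightarrow> ('e \<Rightarrow> 'v) \<Rightarrow> 'v set \<Rightarrow> 'v set \<Rightarrow> nat" where
  "min_cut E tail head S T = (LEAST n. \<exists>C. C \<subseteq> E \<and> card C = n \<and> separates E tail head C S T)"

definition two_unicast_net ::
  "'v set \<Rightarrow> 'e set \<Rightarrow> ('e \<Rightarrow> 'v) \<Rightarrow> ('e \<Rightarrow> 'v) \<Rightarrow> 'v \<Rightarrow> 'v \<Rightarrow> 'v \<Rightarrow> 'v \<Rightarrow> bool" where
  "two_unicast_net V E tail head s1 s2 t1 t2 \<longleftrightarrow>
     finite V \<and> finite E \<and> (\<forall>e\<in>E. tail e \<in> V \<and> head e \<in> V) \<and> acyclic_net E tail head \<and>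
     s1 \<in> V \<and> s2 \<in> V \<and> t1 \<in> V \<and> t2 \<in> V \<and> s1 \<noteq> s2 \<and> t1 \<noteq> t2 \<and>
     In_edges E head s1 = {} \<and> In_edges E head s2 = {} \<and>
     Out_edges E tail t1 = {} \<and> Out_edges E tail t2 = {}"

text \<open>x is the assignment of symbols to edges induced by the source symbols Y (on the
  outgoing edges of the sources) and the local coding coefficients beta at non-source nodes:
  beta e' e is the coefficient of incoming edge e' in outgoing edge e.\<close>
definition net_flow ::
  "('a, 'm) ring_scheme \<Rightarrow> 'e set \<Rightarrow> ('e \<Rightarrow> 'v) \<Rightarrow> ('e \<Rightarrow> 'v) \<Rightarrow> 'v set \<Rightarrow>
   ('e \<Rightarrow> 'e \<Rightarrow> 'a) \<Rightarrow> ('e \<Rightarrow> 'a) \<Rightarrow> ('e \<Rightarrow> 'a) \<Rightarrow> bool" where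
  "net_flow K E tail head srcs beta Y x \<longleftrightarrow>
     (\<forall>e\<in>E. x e = (if tail e \<in> srcs then Y e
                   else finsum K (\<lambda>e'. beta e' e \<otimes>\<^bsub>K\<^esub> x e') (In_edges E head (tail e))))"

text \<open>Matrices are functions indexed by a row set and a column set.\<close>
definition mat_mult :: "('a, 'm) ring_scheme \<Rightarrow> ('r \<Rightarrow> 'j \<Rightarrow> 'a) \<Rightarrow> 'j set \<Rightarrow> ('j \<Rightarrow> 'c \<Rightarrow> 'a) \<Rightarrow> 'r \<Rightarrow> 'c \<Rightarrow> 'a" where
  "mat_mult K A J B = (\<lambda>r c. finsum K (\<lambda>j. A r j \<otimes>\<^bsub>K\<^esub> B j c) J)"

definition mat_concat :: "('r \<Rightarrow> 'c \<Rightarrow> 'a) \<Rightarrow> ('r \<Rightarrow> 'd \<Rightarrow> 'a) \<Rightarrow> 'r \<Rightarrow> 'c + 'd \<Rightarrow> 'a" where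
  "mat_concat A B = (\<lambda>r c. case c of Inl a \<Rightarrow> A r a | Inr b \<Rightarrow> B r b)"

definition cols_indep :: "('a, 'm) ring_scheme \<Rightarrow> 'r set \<Rightarrow> ('r \<Rightarrow> 'c \<Rightarrow> 'a) \<Rightarrow> 'c set \<Rightarrow> bool" where
  "cols_indep K Rw A S \<longleftrightarrow>
     (\<forall>c. c \<in> S \<rightarrow> carrier K \<longrightarrow>
          (\<forall>r\<in>Rw. finsum K (\<lambda>j. c j \<otimes>\<^bsub>K\<^esub> A r j) S = \<zero>\<^bsub>K\<^esub>) \<longrightarrow> (\<forall>j\<in>S. c j = \<zero>\<^bsub>K\<^esub>))"

definition mat_rank :: "('a, 'm) ring_scheme \<Rightarrow> 'r set \<Rightarrow> 'c set \<Rightarrow> ('r \<Rightarrow> 'c \<Rightarrow> 'a) \<Rightarrow> nat" where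
  "mat_rank K Rw C A = Max (card ` {S. S \<subseteq> C \<and> cols_indep K Rw A S})"

definition src_symbols ::
  "('a, 'm) ring_scheme \<Rightarrow> ('e \<Rightarrow> 'v) \<Rightarrow> 'v \<Rightarrow> 'v \<Rightarrow> nat \<Rightarrow> nat \<Rightarrow>
   ('e \<Rightarrow> nat \<Rightarrow> 'a) \<Rightarrow> ('e \<Rightarrow> nat \<Rightarrow> 'a) \<Rightarrow> (nat \<Rightarrow> 'a) \<Rightarrow> (nat \<Rightarrow> 'a) \<Rightarrow> 'e \<Rightarrow> 'a" where
  "src_symbols K tail s1 s2 R1 R2 M1 M2 U1 U2 =
     (\<lambda>e. if tail e = s1 then finsum K (\<lambda>r. M1 e r \<otimes>\<^bsub>K\<^esub> U1 r) {..<R1}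
          else if tail e = s2 then finsum K (\<lambda>r. M2 e r \<otimes>\<^bsub>K\<^esub> U2 r) {..<R2}
          else \<zero>\<^bsub>K\<^esub>)"

text \<open>(R1,R2) is achievable: for some finite field (represented, up to isomorphism, as a
  HOL-Algebra field with carrier a set of naturals) there is a linear network code
  (local coefficients beta, source encoding matrices M1, M2) such that the symbols received
  by t_i determine the message of s_i.\<close>
definition achievable ::
  "'e set \<Rightarrow> ('e \<Rightarrow> 'v) \<Rightarrow> ('e \<Rightarrow> 'v) \<Rightarrow> 'v \<Rightarrow> 'v \<Rightarrow> 'v \<Rightarrow> 'v \<Rightarrow> nat \<Rightarrow> nat \<Rightarrow> bool" where
  "achievable E tail head s1 s2 t1 t2 R1 R2 \<longleftrightarrow>
     (\<exists>K :: nat ring. field K \<and> finite (carrier K) \<and>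
       (\<exists>beta M1 M2.
          (\<forall>e e'. beta e e' \<in> carrier K) \<and> (\<forall>e r. M1 e r \<in> carrier K) \<and> (\<forall>e r. M2 e r \<in> carrier K) \<and>
          (\<forall>U1 U2 U1' U2' x x'.
             U1 \<in> {..<R1} \<rightarrow> carrier K \<longrightarrow> U2 \<in> {..<R2} \<rightarrow> carrier K \<longrightarrow>
             U1' \<in> {..<R1} \<rightarrow> carrier K \<longrightarrow> U2' \<in> {..<R2} \<rightarrow> carrier K \<longrightarrow>
             net_flow K E tail head {s1, s2} beta (src_symbols K tail s1 s2 R1 R2 M1 M2 U1 U2) x \<longrightarrow>
             net_flow K E tail head {s1, s2} beta (src_symbols K tail s1 s2 R1 R2 M1 M2 U1' U2') x' \<longrightarrow>
             ((\<forall>e\<in>In_edges E head t1. x e = x' e) \<longrightarrow> (\<forall>r<R1. U1 r = U1' r)) \<and>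
             ((\<forall>e\<in>In_edges E head t2. x e = x' e) \<longrightarrow> (\<forall>r<R2. U2 r = U2' r)))))"

end

theory Submission
  imports Defs "HOL-Algebra.QuotRing" "HOL-Algebra.Multiplicative_Group"
begin

(* Write O1, O2 for the outgoing edges of s1, s2, T1, T2 for the incoming edges
   of t1, t2, and J_i = H_i2 M2 for the end-to-end matrix of the coded source s2 at t_i.
   We use a linear code in which s1 sends R1 uncoded symbols on a set Q of outgoing edges and
   s2 uses R2 of the columns of M2, indexed by a set P.
   - At t1 we need: no nonzero combination of the columns Q of H11 lies in the span of the
     columns P of J1.  Such Q, P exist by an exchange argument with bases of the column spaces
     of H11 and [H11 J1], using R1 <= rank H11 and R1 + R2 <= rank [H11 J1].
   - At t2, the R1s = rank H21 independent columns of H21 M1 span all columns of H21, so the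
     interference of s1 at t2 lies in the column span of H21 M1; since [H21 M1  J2] has full
     column rank, the columns of J2 stay independent modulo this interference. *)

(* Free the disjoint-sum notation A <+> B used for column indices of concatenated matrices. *)
no_notation set_add (infixl \<open><+>\<index>\<close> 60)

definition cmat :: "('a, 'm) ring_scheme \<Rightarrow> ('r \<Rightarrow> 'c \<Rightarrow> 'a) \<Rightarrow> bool" where
  "cmat K A \<longleftrightarrow> (\<forall>r c. A r c \<in> carrier K)"

definition inspan :: "('a, 'm) ring_scheme \<Rightarrow> 'r set \<Rightarrow> ('r \<Rightarrow> 'c \<Rightarrow> 'a) \<Rightarrow> 'c set \<Rightarrow> ('r \<Rightarrow> 'a) \<Rightarrow> bool" where
  "inspan K T A Y w \<longleftrightarrow> (\<exists>a \<in> Y \<rightarrow> carrier K. \<forall>r\<in>T. w r = finsum K (\<lambda>y. a y \<otimes>\<^bsub>K\<^esub> A r y) Y)"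

text \<open>In a received signal A c + B d (rows T), the component c is determined: no
  interference B d can cancel a nonzero combination of the columns I of A.\<close>
definition decodes_left ::
  "('a, 'm) ring_scheme \<Rightarrow> 'r set \<Rightarrow> ('r \<Rightarrow> 'i \<Rightarrow> 'a) \<Rightarrow> 'i set \<Rightarrow> ('r \<Rightarrow> 'j \<Rightarrow> 'a) \<Rightarrow> 'j set \<Rightarrow> bool" where
  "decodes_left K T A I B J \<longleftrightarrow>
     (\<forall>c \<in> I \<rightarrow> carrier K. \<forall>d \<in> J \<rightarrow> carrier K.
        (\<forall>r\<in>T. finsum K (\<lambda>i. c i \<otimes>\<^bsub>K\<^esub> A r i) I \<oplus>\<^bsub>K\<^esub> finsum K (\<lambda>j. d j \<otimes>\<^bsub>K\<^esub> B r j) J = \<zero>\<^bsub>K\<^esub>)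
        \<longrightarrow> (\<forall>i\<in>I. c i = \<zero>\<^bsub>K\<^esub>))"

definition decodes ::
  "('a, 'm) ring_scheme \<Rightarrow> 'e set \<Rightarrow> ('e \<Rightarrow> 'v) \<Rightarrow> ('e \<Rightarrow> 'v) \<Rightarrow> 'v \<Rightarrow> 'v \<Rightarrow> 'v \<Rightarrow> 'v \<Rightarrow>
   nat \<Rightarrow> nat \<Rightarrow> ('e \<Rightarrow> 'e \<Rightarrow> 'a) \<Rightarrow> ('e \<Rightarrow> nat \<Rightarrow> 'a) \<Rightarrow> ('e \<Rightarrow> nat \<Rightarrow> 'a) \<Rightarrow> bool" where
  "decodes K E tail head s1 s2 t1 t2 R1 R2 beta M1 M2 \<longleftrightarrow>
     (\<forall>U1 U2 U1' U2' x x'.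
        U1 \<in> {..<R1} \<rightarrow> carrier K \<longrightarrow> U2 \<in> {..<R2} \<rightarrow> carrier K \<longrightarrow>
        U1' \<in> {..<R1} \<rightarrow> carrier K \<longrightarrow> U2' \<in> {..<R2} \<rightarrow> carrier K \<longrightarrow>
        net_flow K E tail head {s1, s2} beta (src_symbols K tail s1 s2 R1 R2 M1 M2 U1 U2) x \<longrightarrow>
        net_flow K E tail head {s1, s2} beta (src_symbols K tail s1 s2 R1 R2 M1 M2 U1' U2') x' \<longrightarrow>
        ((\<forall>e\<in>In_edges E head t1. x e = x' e) \<longrightarrow> (\<forall>r<R1. U1 r = U1' r)) \<and>
        ((\<forall>e\<in>In_edges E head t2. x e = x' e) \<longrightarrow> (\<forall>r<R2. U2 r = U2' r)))"

definition channel_matrices ::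
  "('a, 'm) ring_scheme \<Rightarrow> 'e set \<Rightarrow> ('e \<Rightarrow> 'v) \<Rightarrow> ('e \<Rightarrow> 'v) \<Rightarrow> 'v \<Rightarrow> 'v \<Rightarrow> 'v \<Rightarrow> 'v \<Rightarrow>
   ('e \<Rightarrow> 'e \<Rightarrow> 'a) \<Rightarrow> ('e \<Rightarrow> 'e \<Rightarrow> 'a) \<Rightarrow> ('e \<Rightarrow> 'e \<Rightarrow> 'a) \<Rightarrow> ('e \<Rightarrow> 'e \<Rightarrow> 'a) \<Rightarrow>
   ('e \<Rightarrow> 'e \<Rightarrow> 'a) \<Rightarrow> bool" where
  "channel_matrices K E tail head s1 s2 t1 t2 beta H11 H12 H21 H22 \<longleftrightarrow>
     (\<forall>Y x. (\<forall>e. Y e \<in> carrier K) \<longrightarrow> net_flow K E tail head {s1, s2} beta Y x \<longrightarrow>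
        (\<forall>e\<in>In_edges E head t1. x e =
            finsum K (\<lambda>e'. H11 e e' \<otimes>\<^bsub>K\<^esub> Y e') (Out_edges E tail s1) \<oplus>\<^bsub>K\<^esub>
            finsum K (\<lambda>e'. H12 e e' \<otimes>\<^bsub>K\<^esub> Y e') (Out_edges E tail s2)) \<and>
        (\<forall>e\<in>In_edges E head t2. x e =
            finsum K (\<lambda>e'. H21 e e' \<otimes>\<^bsub>K\<^esub> Y e') (Out_edges E tail s1) \<oplus>\<^bsub>K\<^esub>
            finsum K (\<lambda>e'. H22 e e' \<otimes>\<^bsub>K\<^esub> Y e') (Out_edges E tail s2)))"

lemma achievable_iff_decodes:
  "achievable E tail head s1 s2 t1 t2 R1 R2 \<longleftrightarrow>
     (\<exists>K :: nat ring. field K \<and> finite (carrier K) \<and>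
       (\<exists>beta M1 M2. (\<forall>e e'. beta e e' \<in> carrier K) \<and> (\<forall>e r. M1 e r \<in> carrier K) \<and>
          (\<forall>e r. M2 e r \<in> carrier K) \<and> decodes K E tail head s1 s2 t1 t2 R1 R2 beta M1 M2))"
  unfolding achievable_def decodes_def ..

lemma cmat_concat: "cmat K A \<Longrightarrow> cmat K B \<Longrightarrow> cmat K (mat_concat A B)"
  by (auto simp: cmat_def mat_concat_def split: sum.split)

lemma (in ring) cmat_mult: "cmat R A \<Longrightarrow> cmat R B \<Longrightarrow> cmat R (mat_mult R A J B)"
  by (auto simp: cmat_def mat_mult_def intro!: finsum_closed)

lemma Plus_decomp: "S \<subseteq> X <+> Y \<Longrightarrow> S = {x. Inl x \<in> S} <+> {y. Inr y \<in> S}"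
  by (auto simp: Plus_def)

subsection \<open>Finite sums\<close>

context ring
begin

lemma finsum_Plus:
  assumes "finite A" "finite B" "f \<in> (A <+> B) \<rightarrow> carrier R"
  shows "finsum R f (A <+> B) = finsum R (\<lambda>a. f (Inl a)) A \<oplus> finsum R (\<lambda>b. f (Inr b)) B"
proof -
  have "finsum R f (A <+> B) = finsum R f (Inl ` A) \<oplus> finsum R f (Inr ` B)"
    unfolding Plus_def using assms by (intro finsum_Un_disjoint) (auto simp: Plus_def)
  also have "finsum R f (Inl ` A) = finsum R (\<lambda>a. f (Inl a)) A"
    using assms by (intro finsum_reindex) (auto simp: Plus_def)
  also have "finsum R f (Inr ` B) = finsum R (\<lambda>b. f (Inr b)) B"
    using assms by (intro finsum_reindex) (auto simp: Plus_def)
  finally show ?thesis .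
qed

lemma lincomb_concat:
  assumes "finite X" "finite Y" "cmat R A" "cmat R B" "c \<in> (X <+> Y) \<rightarrow> carrier R"
  shows "finsum R (\<lambda>z. c z \<otimes> mat_concat A B r z) (X <+> Y)
       = finsum R (\<lambda>x. c (Inl x) \<otimes> A r x) X \<oplus> finsum R (\<lambda>y. c (Inr y) \<otimes> B r y) Y"
proof -
  have "(\<lambda>z. c z \<otimes> mat_concat A B r z) \<in> (X <+> Y) \<rightarrow> carrier R"
    using assms by (auto simp: cmat_def mat_concat_def Pi_iff split: sum.split)
  from finsum_Plus[OF assms(1,2) this] show ?thesis by (simp add: mat_concat_def)
qed

lemma lincomb_reindex:
  assumes "inj_on f S" "c \<in> f ` S \<rightarrow> carrier R" "cmat R A"
  shows "finsum R (\<lambda>j. c j \<otimes> A r j) (f ` S) = finsum R (\<lambda>s. c (f s) \<otimes> A r (f s)) S"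
  using assms by (intro finsum_reindex) (auto simp: cmat_def)

lemma finsum_swap:
  assumes "finite A" "finite B" "\<And>a b. a \<in> A \<Longrightarrow> b \<in> B \<Longrightarrow> f a b \<in> carrier R"
  shows "finsum R (\<lambda>a. finsum R (\<lambda>b. f a b) B) A = finsum R (\<lambda>b. finsum R (\<lambda>a. f a b) A) B"
  using assms
proof (induct A rule: finite_induct)
  case empty then show ?case by (simp add: finsum_zero)
next
  case (insert x F)
  have "finsum R (\<lambda>a. finsum R (\<lambda>b. f a b) B) (insert x F)
      = finsum R (\<lambda>b. f x b) B \<oplus> finsum R (\<lambda>b. finsum R (\<lambda>a. f a b) F) B"
    using insert by (subst finsum_insert) (auto intro!: finsum_closed)
  also have "\<dots> = finsum R (\<lambda>b. f x b \<oplus> finsum R (\<lambda>a. f a b) F) B"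
    using insert by (intro finsum_addf[symmetric]) (auto intro!: finsum_closed)
  also have "\<dots> = finsum R (\<lambda>b. finsum R (\<lambda>a. f a b) (insert x F)) B"
    using insert by (intro finsum_cong') (auto intro!: finsum_insert[symmetric])
  finally show ?case .
qed

lemma finsum_diff:
  assumes "finite A" "a \<in> A \<rightarrow> carrier R" "b \<in> A \<rightarrow> carrier R" "g \<in> A \<rightarrow> carrier R"
  shows "finsum R (\<lambda>i. a i \<otimes> g i) A \<ominus> finsum R (\<lambda>i. b i \<otimes> g i) A
       = finsum R (\<lambda>i. (a i \<ominus> b i) \<otimes> g i) A"
  using assms
proof (induct A rule: finite_induct)
  case empty then show ?case by (simp add: minus_eq)
next
  case (insert x F)
  let ?A = "finsum R (\<lambda>i. a i \<otimes> g i) F" and ?B = "finsum R (\<lambda>i. b i \<otimes> g i) F"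
  have c: "?A \<in> carrier R" "?B \<in> carrier R" using insert by (auto intro!: finsum_closed)
  have ax: "a x \<in> carrier R" "b x \<in> carrier R" "g x \<in> carrier R" using insert by auto
  have "finsum R (\<lambda>i. a i \<otimes> g i) (insert x F) \<ominus> finsum R (\<lambda>i. b i \<otimes> g i) (insert x F)
      = (a x \<otimes> g x \<oplus> ?A) \<ominus> (b x \<otimes> g x \<oplus> ?B)"
    using insert by (simp add: finsum_insert Pi_iff)
  also have "\<dots> = (a x \<ominus> b x) \<otimes> g x \<oplus> (?A \<ominus> ?B)"
    using c ax by (simp add: minus_eq l_distr minus_add l_minus a_ac)
  also have "?A \<ominus> ?B = finsum R (\<lambda>i. (a i \<ominus> b i) \<otimes> g i) F" using insert by auto
  also have "(a x \<ominus> b x) \<otimes> g x \<oplus> \<dots> = finsum R (\<lambda>i. (a i \<ominus> b i) \<otimes> g i) (insert x F)"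
    using insert by (subst finsum_insert) (auto simp: minus_eq Pi_iff)
  finally show ?case .
qed

lemma lincomb_zero_ext:
  assumes "finite Y" "P \<subseteq> Y" "d \<in> P \<rightarrow> carrier R" "cmat R J"
  shows "finsum R (\<lambda>p. (if p \<in> P then d p else \<zero>) \<otimes> J r p) Y = finsum R (\<lambda>p. d p \<otimes> J r p) P"
  using assms by (intro add.finprod_mono_neutral_cong_left[symmetric]) (auto simp: cmat_def Pi_iff)

end

subsection \<open>Independent columns and spans\<close>

context ring
begin

lemma cols_indep_empty: "cols_indep R T A {}"
  by (simp add: cols_indep_def)

lemma cols_indep_subset:
  assumes ind: "cols_indep R T A S" and sub: "S' \<subseteq> S" and fin: "finite S" and cm: "cmat R A"
  shows "cols_indep R T A S'"
  unfolding cols_indep_def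
proof (intro allI impI ballI)
  fix c j assume c: "c \<in> S' \<rightarrow> carrier R" and j: "j \<in> S'"
    and z: "\<forall>r\<in>T. finsum R (\<lambda>j. c j \<otimes> A r j) S' = \<zero>"
  let ?c = "\<lambda>j. if j \<in> S' then c j else \<zero>"
  have "\<forall>r\<in>T. finsum R (\<lambda>j. ?c j \<otimes> A r j) S = \<zero>"
    using z lincomb_zero_ext[OF fin sub c cm] by simp
  moreover have "?c \<in> S \<rightarrow> carrier R" using c by auto
  ultimately have "?c j = \<zero>" using ind j sub unfolding cols_indep_def by blast
  then show "c j = \<zero>" using j by simp
qed

lemma cols_indep_reindex:
  assumes inj: "inj_on f S" and cm: "cmat R A"
  shows "cols_indep R T A (f ` S) \<longleftrightarrow> cols_indep R T (\<lambda>r s. A r (f s)) S"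
proof
  assume ind: "cols_indep R T A (f ` S)"
  show "cols_indep R T (\<lambda>r s. A r (f s)) S" unfolding cols_indep_def
  proof (intro allI impI ballI)
    fix c s assume c: "c \<in> S \<rightarrow> carrier R" and s: "s \<in> S"
      and z: "\<forall>r\<in>T. finsum R (\<lambda>s. c s \<otimes> A r (f s)) S = \<zero>"
    define c' where "c' j = c (inv_into S f j)" for j
    have c': "c' \<in> f ` S \<rightarrow> carrier R" using c inj by (auto simp: c'_def)
    have "finsum R (\<lambda>j. c' j \<otimes> A r j) (f ` S) = finsum R (\<lambda>s. c s \<otimes> A r (f s)) S" for r
      unfolding lincomb_reindex[OF inj c' cm] using c inj cm
      by (intro finsum_cong') (auto simp: c'_def cmat_def)
    with z have "\<forall>r\<in>T. finsum R (\<lambda>j. c' j \<otimes> A r j) (f ` S) = \<zero>" by simp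
    with ind c' s have "c' (f s) = \<zero>" unfolding cols_indep_def by blast
    then show "c s = \<zero>" using inj s by (simp add: c'_def)
  qed
next
  assume ind: "cols_indep R T (\<lambda>r s. A r (f s)) S"
  show "cols_indep R T A (f ` S)" unfolding cols_indep_def
  proof (intro allI impI ballI)
    fix c j assume c: "c \<in> f ` S \<rightarrow> carrier R" and j: "j \<in> f ` S"
      and z: "\<forall>r\<in>T. finsum R (\<lambda>j. c j \<otimes> A r j) (f ` S) = \<zero>"
    have "(\<lambda>s. c (f s)) \<in> S \<rightarrow> carrier R" using c by auto
    moreover have "\<forall>r\<in>T. finsum R (\<lambda>s. c (f s) \<otimes> A r (f s)) S = \<zero>"
      using z lincomb_reindex[OF inj c cm] by simp
    ultimately have "\<forall>s\<in>S. c (f s) = \<zero>" using ind unfolding cols_indep_def by auto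
    then show "c j = \<zero>" using j by auto
  qed
qed

lemma inspan_reindex:
  assumes inj: "inj_on f S" and cm: "cmat R A"
  shows "inspan R T A (f ` S) w \<longleftrightarrow> inspan R T (\<lambda>r s. A r (f s)) S w"
proof
  assume "inspan R T A (f ` S) w"
  then obtain a where a: "a \<in> f ` S \<rightarrow> carrier R" "\<forall>r\<in>T. w r = finsum R (\<lambda>j. a j \<otimes> A r j) (f ` S)"
    unfolding inspan_def by blast
  then show "inspan R T (\<lambda>r s. A r (f s)) S w" unfolding inspan_def
    by (intro bexI[of _ "\<lambda>s. a (f s)"]) (auto simp: lincomb_reindex[OF inj a(1) cm])
next
  assume "inspan R T (\<lambda>r s. A r (f s)) S w"
  then obtain a where a: "a \<in> S \<rightarrow> carrier R" "\<forall>r\<in>T. w r = finsum R (\<lambda>s. a s \<otimes> A r (f s)) S"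
    unfolding inspan_def by blast
  define a' where "a' j = a (inv_into S f j)" for j
  have a': "a' \<in> f ` S \<rightarrow> carrier R" using a inj by (auto simp: a'_def)
  have "finsum R (\<lambda>j. a' j \<otimes> A r j) (f ` S) = finsum R (\<lambda>s. a s \<otimes> A r (f s)) S" for r
    unfolding lincomb_reindex[OF inj a' cm] using a inj cm
    by (intro finsum_cong') (auto simp: a'_def cmat_def)
  then show "inspan R T A (f ` S) w" unfolding inspan_def using a a' by (intro bexI[OF _ a']) auto
qed

lemma cols_indep_concat_left:
  assumes "cmat R A" "cmat R B"
  shows "cols_indep R T (mat_concat A B) (X <+> {}) \<longleftrightarrow> cols_indep R T A X"
proof -
  have "cols_indep R T (mat_concat A B) (Inl ` X)
      \<longleftrightarrow> cols_indep R T (\<lambda>r x. mat_concat A B r (Inl x)) X"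
    using assms by (intro cols_indep_reindex cmat_concat) auto
  also have "(\<lambda>r x. mat_concat A B r (Inl x)) = A" by (simp add: mat_concat_def)
  also have "Inl ` X = X <+> {}" by auto
  finally show ?thesis .
qed

lemma cols_indep_concat_right:
  assumes "cmat R A" "cmat R B"
  shows "cols_indep R T (mat_concat A B) ({} <+> Y) \<longleftrightarrow> cols_indep R T B Y"
proof -
  have "cols_indep R T (mat_concat A B) (Inr ` Y)
      \<longleftrightarrow> cols_indep R T (\<lambda>r x. mat_concat A B r (Inr x)) Y"
    using assms by (intro cols_indep_reindex cmat_concat) auto
  also have "(\<lambda>r x. mat_concat A B r (Inr x)) = B" by (simp add: mat_concat_def)
  also have "Inr ` Y = {} <+> Y" by auto
  finally show ?thesis .
qed

lemma cols_indep_concat_swap: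
  assumes "cmat R A" "cmat R B"
  shows "cols_indep R T (mat_concat A B) (X <+> Y) \<longleftrightarrow> cols_indep R T (mat_concat B A) (Y <+> X)"
proof -
  define sw where "sw = (case_sum Inr Inl :: 'e + 'd \<Rightarrow> 'd + 'e)"
  have "inj_on sw (Y <+> X)" unfolding sw_def by (auto simp: inj_on_def split: sum.splits)
  then have "cols_indep R T (mat_concat A B) (sw ` (Y <+> X))
      \<longleftrightarrow> cols_indep R T (\<lambda>r s. mat_concat A B r (sw s)) (Y <+> X)"
    using assms by (intro cols_indep_reindex cmat_concat)
  also have "(\<lambda>r s. mat_concat A B r (sw s)) = mat_concat B A"
    unfolding sw_def by (auto simp: mat_concat_def fun_eq_iff split: sum.split)
  also have "sw ` (Y <+> X) = X <+> Y"
    unfolding sw_def by (auto simp: Plus_def image_Un image_image)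
  finally show ?thesis .
qed

lemma inspan_concat_left:
  assumes "cmat R A" "cmat R B"
  shows "inspan R T (mat_concat A B) (X <+> {}) w \<longleftrightarrow> inspan R T A X w"
proof -
  have "inspan R T (mat_concat A B) (Inl ` X) w
      \<longleftrightarrow> inspan R T (\<lambda>r x. mat_concat A B r (Inl x)) X w"
    using assms by (intro inspan_reindex cmat_concat) auto
  also have "(\<lambda>r x. mat_concat A B r (Inl x)) = A" by (simp add: mat_concat_def)
  also have "Inl ` X = X <+> {}" by auto
  finally show ?thesis .
qed

lemma inspan_col:
  assumes "c \<in> Y" "finite Y" "cmat R A"
  shows "inspan R T A Y (\<lambda>r. A r c)"
  unfolding inspan_def
proof (intro bexI ballI)
  fix r
  have "finsum R (\<lambda>y. (if y = c then \<one> else \<zero>) \<otimes> A r y) Y = finsum R (\<lambda>y. if c = y then A r y else \<zero>) Y"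
    using assms by (intro finsum_cong') (auto simp: cmat_def)
  also have "\<dots> = A r c" using assms by (intro finsum_singleton) (auto simp: cmat_def)
  finally show "A r c = finsum R (\<lambda>y. (if y = c then \<one> else \<zero>) \<otimes> A r y) Y" by simp
qed auto

lemma inspan_mono:
  assumes "inspan R T A Y w" "Y \<subseteq> Y'" "finite Y'" "cmat R A"
  shows "inspan R T A Y' w"
proof -
  obtain a where a: "a \<in> Y \<rightarrow> carrier R" "\<forall>r\<in>T. w r = finsum R (\<lambda>y. a y \<otimes> A r y) Y"
    using assms(1) unfolding inspan_def by blast
  let ?a = "\<lambda>y. if y \<in> Y then a y else \<zero>"
  have "?a \<in> Y' \<rightarrow> carrier R" using a by auto
  moreover have "\<forall>r\<in>T. w r = finsum R (\<lambda>y. ?a y \<otimes> A r y) Y'"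
    using a lincomb_zero_ext[OF assms(3,2) a(1) assms(4)] by simp
  ultimately show ?thesis unfolding inspan_def by (intro bexI) 
qed

lemma inspan_lincomb:
  assumes finI: "finite I" and finY: "finite Y" and cmA: "cmat R A" and cmB: "cmat R B"
    and c: "c \<in> I \<rightarrow> carrier R" and sp: "\<forall>i\<in>I. inspan R T A Y (\<lambda>r. B r i)"
  shows "inspan R T A Y (\<lambda>r. finsum R (\<lambda>i. c i \<otimes> B r i) I)"
proof -
  from sp obtain \<alpha> where \<alpha>: "\<forall>i\<in>I. \<alpha> i \<in> Y \<rightarrow> carrier R \<and> (\<forall>r\<in>T. B r i = finsum R (\<lambda>y. \<alpha> i y \<otimes> A r y) Y)"
    unfolding inspan_def by (metis (no_types) bchoice)
  define a where "a y = finsum R (\<lambda>i. c i \<otimes> \<alpha> i y) I" for y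
  have ca: "a \<in> Y \<rightarrow> carrier R" using \<alpha> c unfolding a_def by (auto intro!: finsum_closed simp: Pi_iff)
  show ?thesis unfolding inspan_def
  proof (intro bexI[OF _ ca] ballI)
    fix r assume r: "r \<in> T"
    have "finsum R (\<lambda>i. c i \<otimes> B r i) I = finsum R (\<lambda>i. finsum R (\<lambda>y. c i \<otimes> (\<alpha> i y \<otimes> A r y)) Y) I"
      using \<alpha> r c cmA finY
      by (intro finsum_cong') (auto simp: cmat_def Pi_iff intro!: finsum_rdistr finsum_closed)
    also have "\<dots> = finsum R (\<lambda>y. finsum R (\<lambda>i. c i \<otimes> (\<alpha> i y \<otimes> A r y)) I) Y"
      using \<alpha> c cmA finY finI by (intro finsum_swap) (auto simp: cmat_def Pi_iff)
    also have "\<dots> = finsum R (\<lambda>y. a y \<otimes> A r y) Y"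
    proof (intro finsum_cong')
      fix y assume y: "y \<in> Y"
      have "a y \<otimes> A r y = finsum R (\<lambda>i. c i \<otimes> \<alpha> i y \<otimes> A r y) I"
        unfolding a_def using \<alpha> c cmA finI y by (intro finsum_ldistr) (auto simp: cmat_def Pi_iff)
      also have "\<dots> = finsum R (\<lambda>i. c i \<otimes> (\<alpha> i y \<otimes> A r y)) I"
        using \<alpha> c cmA y by (intro finsum_cong') (auto simp: cmat_def Pi_iff m_assoc)
      finally show "finsum R (\<lambda>i. c i \<otimes> (\<alpha> i y \<otimes> A r y)) I = a y \<otimes> A r y" by simp
    qed (use ca cmA in \<open>auto simp: cmat_def\<close>)
    finally show "finsum R (\<lambda>i. c i \<otimes> B r i) I = finsum R (\<lambda>y. a y \<otimes> A r y) Y" .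
  qed
qed

lemma rank_ex:
  assumes "finite C"
  shows "\<exists>S\<subseteq>C. cols_indep R T A S \<and> card S = mat_rank R T C A"
proof -
  let ?F = "{S. S \<subseteq> C \<and> cols_indep R T A S}"
  have "finite ?F" using assms by (intro finite_subset[of ?F "Pow C"]) blast+
  moreover have "{} \<in> ?F" by (simp add: cols_indep_empty)
  ultimately have "Max (card ` ?F) \<in> card ` ?F" by (intro Max_in) auto
  then show ?thesis unfolding mat_rank_def by auto
qed

lemma rank_le:
  assumes "finite C" "S \<subseteq> C" "cols_indep R T A S"
  shows "card S \<le> mat_rank R T C A"
proof -
  let ?F = "{S. S \<subseteq> C \<and> cols_indep R T A S}"
  have "finite ?F" using assms by (intro finite_subset[of ?F "Pow C"]) blast+
  then show ?thesis unfolding mat_rank_def using assms by (intro Max_ge) auto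
qed

lemma rank_full:
  assumes "finite C" "mat_rank R T C A = card C"
  shows "cols_indep R T A C"
proof -
  obtain S where "S \<subseteq> C" "cols_indep R T A S" "card S = mat_rank R T C A"
    using rank_ex assms(1) by blast
  moreover then have "S = C" using assms card_subset_eq[of C S] by simp
  ultimately show ?thesis by simp
qed

end

subsection \<open>Bases and the exchange bound over a finite field\<close>

context field
begin

lemma inspan_of_dependent_insert:
  assumes fin: "finite S" and ind: "cols_indep R T A S" and cS: "c \<notin> S"
    and dep: "\<not> cols_indep R T A (insert c S)" and cm: "cmat R A"
  shows "inspan R T A S (\<lambda>r. A r c)"
proof -
  from dep obtain \<gamma> j0 where g: "\<gamma> \<in> insert c S \<rightarrow> carrier R"
    and z: "\<forall>r\<in>T. finsum R (\<lambda>j. \<gamma> j \<otimes> A r j) (insert c S) = \<zero>"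
    and j0: "j0 \<in> insert c S" "\<gamma> j0 \<noteq> \<zero>"
    unfolding cols_indep_def by blast
  have split: "finsum R (\<lambda>j. \<gamma> j \<otimes> A r j) (insert c S) = \<gamma> c \<otimes> A r c \<oplus> finsum R (\<lambda>j. \<gamma> j \<otimes> A r j) S" for r
    using fin cS g cm by (intro finsum_insert) (auto simp: cmat_def Pi_iff)
  have gc: "\<gamma> c \<noteq> \<zero>"
  proof
    assume "\<gamma> c = \<zero>"
    then have "\<forall>r\<in>T. finsum R (\<lambda>j. \<gamma> j \<otimes> A r j) S = \<zero>"
      using z split g cm by (auto simp: cmat_def Pi_iff finsum_closed)
    with ind g have "\<forall>j\<in>S. \<gamma> j = \<zero>" unfolding cols_indep_def by auto
    with j0 \<open>\<gamma> c = \<zero>\<close> show False by auto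
  qed
  have gcc: "\<gamma> c \<in> carrier R" using g by auto
  have gU: "\<gamma> c \<in> Units R" using gc gcc field_Units by auto
  define k where "k = \<ominus> (inv (\<gamma> c))"
  have kc: "k \<in> carrier R" unfolding k_def using gU by auto
  show ?thesis unfolding inspan_def
  proof (rule bexI[where x="\<lambda>j. k \<otimes> \<gamma> j"], intro ballI)
    fix r assume r: "r \<in> T"
    let ?s = "finsum R (\<lambda>j. \<gamma> j \<otimes> A r j) S"
    have sc: "?s \<in> carrier R" using g cm by (auto intro!: finsum_closed simp: cmat_def Pi_iff)
    have Ac: "A r c \<in> carrier R" using cm by (auto simp: cmat_def)
    have ic: "inv (\<gamma> c) \<in> carrier R" using gU by simp
    have "?s \<oplus> \<gamma> c \<otimes> A r c = \<zero>" using z r split sc gcc Ac by (simp add: a_comm)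
    then have s_eq: "?s = \<ominus> (\<gamma> c \<otimes> A r c)" using sc gcc Ac by (simp add: minus_equality)
    have "finsum R (\<lambda>j. k \<otimes> \<gamma> j \<otimes> A r j) S = finsum R (\<lambda>j. k \<otimes> (\<gamma> j \<otimes> A r j)) S"
      using g cm kc by (intro finsum_cong') (auto simp: cmat_def Pi_iff m_assoc)
    also have "\<dots> = k \<otimes> ?s"
      using g cm kc fin by (intro finsum_rdistr[symmetric]) (auto simp: cmat_def Pi_iff)
    also have "\<dots> = inv (\<gamma> c) \<otimes> \<gamma> c \<otimes> A r c"
      unfolding s_eq k_def using ic gcc Ac by (simp add: l_minus r_minus m_assoc)
    also have "\<dots> = A r c" using gU Ac by simp
    finally show "A r c = finsum R (\<lambda>j. k \<otimes> \<gamma> j \<otimes> A r j) S" by simp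
  qed (use g kc in auto)
qed

lemma basis_exists:
  assumes fin: "finite C" and sub: "S0 \<subseteq> C" and ind: "cols_indep R T A S0" and cm: "cmat R A"
  shows "\<exists>B. S0 \<subseteq> B \<and> B \<subseteq> C \<and> cols_indep R T A B \<and> (\<forall>c\<in>C. inspan R T A B (\<lambda>r. A r c))"
proof -
  let ?F = "{B. S0 \<subseteq> B \<and> B \<subseteq> C \<and> cols_indep R T A B}"
  have fF: "finite ?F" using fin by (intro finite_subset[of ?F "Pow C"]) blast+
  have "S0 \<in> ?F" using sub ind by auto
  then have "Max (card ` ?F) \<in> card ` ?F" using fF by (intro Max_in) auto
  then obtain B where B: "B \<in> ?F" "card B = Max (card ` ?F)" by auto
  have fB: "finite B" using B fin finite_subset by auto
  have "inspan R T A B (\<lambda>r. A r c)" if c: "c \<in> C" for c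
  proof (cases "c \<in> B")
    case True show ?thesis by (rule inspan_col[OF True fB cm])
  next
    case False
    have "\<not> cols_indep R T A (insert c B)"
    proof
      assume "cols_indep R T A (insert c B)"
      then have "insert c B \<in> ?F" using B c by auto
      then have "card (insert c B) \<le> Max (card ` ?F)" using fF by (intro Max_ge) auto
      then show False using B False fB by simp
    qed
    then show ?thesis using inspan_of_dependent_insert[OF fB _ False _ cm] B by blast
  qed
  then show ?thesis using B by blast
qed

lemma lincomb_inj:
  assumes finX: "finite X" and ind: "cols_indep R T B X" and cmB: "cmat R B"
  shows "inj_on (\<lambda>c. restrict (\<lambda>r. finsum R (\<lambda>x. c x \<otimes> B r x) X) T) (X \<rightarrow>\<^sub>E carrier R)"
proof (rule inj_onI)
  fix c c' assume c: "c \<in> X \<rightarrow>\<^sub>E carrier R" and c': "c' \<in> X \<rightarrow>\<^sub>E carrier R"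
    and e: "restrict (\<lambda>r. finsum R (\<lambda>x. c x \<otimes> B r x) X) T = restrict (\<lambda>r. finsum R (\<lambda>x. c' x \<otimes> B r x) X) T"
  have "\<forall>r\<in>T. finsum R (\<lambda>x. (c x \<ominus> c' x) \<otimes> B r x) X = \<zero>"
  proof
    fix r assume r: "r \<in> T"
    have "finsum R (\<lambda>x. (c x \<ominus> c' x) \<otimes> B r x) X
        = finsum R (\<lambda>x. c x \<otimes> B r x) X \<ominus> finsum R (\<lambda>x. c' x \<otimes> B r x) X"
      using c c' cmB finX by (intro finsum_diff[symmetric]) (auto simp: cmat_def)
    also have "\<dots> = \<zero>"
    proof -
      have "finsum R (\<lambda>x. c' x \<otimes> B r x) X \<in> carrier R"
        using c' cmB by (auto simp: cmat_def Pi_iff intro!: finsum_closed)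
      then show ?thesis using fun_cong[OF e, of r] r by simp
    qed
    finally show "finsum R (\<lambda>x. (c x \<ominus> c' x) \<otimes> B r x) X = \<zero>" .
  qed
  moreover have "(\<lambda>x. c x \<ominus> c' x) \<in> X \<rightarrow> carrier R" using c c' by auto
  ultimately have "\<forall>x\<in>X. c x \<ominus> c' x = \<zero>" using ind unfolding cols_indep_def by blast
  then show "c = c'" using c c' by (intro extensionalityI[of _ X]) (auto simp: PiE_def Pi_iff)
qed

text \<open>Over a
  finite field with q elements this is counting: the q ^ card X distinct combinations of X all
  lie among the at most q ^ card Y combinations of Y.\<close>
lemma card_indep_le_spanning:
  assumes finK: "finite (carrier R)" and finX: "finite X" and finY: "finite Y"
    and ind: "cols_indep R T B X" and sp: "\<forall>x\<in>X. inspan R T A Y (\<lambda>r. B r x)"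
    and cmA: "cmat R A" and cmB: "cmat R B"
  shows "card X \<le> card Y"
proof -
  define \<Phi> where "\<Phi> c = restrict (\<lambda>r. finsum R (\<lambda>x. c x \<otimes> B r x) X) T" for c
  define \<Psi> where "\<Psi> a = restrict (\<lambda>r. finsum R (\<lambda>y. a y \<otimes> A r y) Y) T" for a
  let ?q = "card (carrier R)"
  have sub: "\<Phi> ` (X \<rightarrow>\<^sub>E carrier R) \<subseteq> \<Psi> ` (Y \<rightarrow>\<^sub>E carrier R)"
  proof
    fix v assume "v \<in> \<Phi> ` (X \<rightarrow>\<^sub>E carrier R)"
    then obtain c where c: "c \<in> X \<rightarrow>\<^sub>E carrier R" and v: "v = \<Phi> c" by blast
    have "inspan R T A Y (\<lambda>r. finsum R (\<lambda>x. c x \<otimes> B r x) X)"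
      using c by (intro inspan_lincomb[OF finX finY cmA cmB _ sp]) auto
    then obtain a where a: "a \<in> Y \<rightarrow> carrier R"
      and av: "\<forall>r\<in>T. finsum R (\<lambda>x. c x \<otimes> B r x) X = finsum R (\<lambda>y. a y \<otimes> A r y) Y"
      unfolding inspan_def by blast
    have "finsum R (\<lambda>y. restrict a Y y \<otimes> A r y) Y = finsum R (\<lambda>y. a y \<otimes> A r y) Y" for r
      using a cmA by (intro finsum_cong') (auto simp: cmat_def)
    then have "\<Psi> (restrict a Y) = v" using av unfolding \<Psi>_def v \<Phi>_def by auto
    moreover have "restrict a Y \<in> Y \<rightarrow>\<^sub>E carrier R" using a by auto
    ultimately show "v \<in> \<Psi> ` (Y \<rightarrow>\<^sub>E carrier R)" by blast
  qed
  have "?q ^ card X = card (\<Phi> ` (X \<rightarrow>\<^sub>E carrier R))"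
    using lincomb_inj[OF finX ind cmB] finX by (simp add: card_image card_PiE \<Phi>_def)
  also have "\<dots> \<le> card (\<Psi> ` (Y \<rightarrow>\<^sub>E carrier R))"
    using sub finY finK by (intro card_mono) (auto intro!: finite_PiE)
  also have "\<dots> \<le> card (Y \<rightarrow>\<^sub>E carrier R)"
    using finY finK by (intro card_image_le) (auto intro!: finite_PiE)
  also have "\<dots> = ?q ^ card Y" using finY by (simp add: card_PiE)
  finally have le: "?q ^ card X \<le> ?q ^ card Y" .
  have "card {\<zero>, \<one>} \<le> ?q" using finK by (intro card_mono) auto
  then have "1 < ?q" by simp
  with le show ?thesis using power_le_imp_le_exp by blast
qed

lemma rank_le_spanning:
  assumes finK: "finite (carrier R)" and finC: "finite C" and finS: "finite S"
    and sp: "\<forall>c\<in>C. inspan R T A S (\<lambda>r. A r c)" and cm: "cmat R A"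
  shows "mat_rank R T C A \<le> card S"
proof -
  obtain X where X: "X \<subseteq> C" "cols_indep R T A X" "card X = mat_rank R T C A"
    using rank_ex[OF finC] by blast
  have "card X \<le> card S"
    using X sp finite_subset[OF X(1) finC]
    by (intro card_indep_le_spanning[OF finK _ finS X(2) _ cm cm]) auto
  with X(3) show ?thesis by simp
qed

end

subsection \<open>The decoding condition\<close>

context ring
begin

lemma decodes_left_by_span:
  assumes finX: "finite X" and finY: "finite Y" and finJ: "finite J"
    and cm: "cmat R A" "cmat R B" "cmat R C"
    and ind: "cols_indep R T (mat_concat A B) (X <+> Y)" and IX: "I \<subseteq> X"
    and sp: "\<forall>j\<in>J. inspan R T B Y (\<lambda>r. C r j)"
  shows "decodes_left R T A I C J"
  unfolding decodes_left_def
proof (intro ballI impI)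
  fix c d i assume c: "c \<in> I \<rightarrow> carrier R" and d: "d \<in> J \<rightarrow> carrier R" and i: "i \<in> I"
    and z: "\<forall>r\<in>T. finsum R (\<lambda>i. c i \<otimes> A r i) I \<oplus> finsum R (\<lambda>j. d j \<otimes> C r j) J = \<zero>"
  have "inspan R T B Y (\<lambda>r. finsum R (\<lambda>j. d j \<otimes> C r j) J)"
    by (rule inspan_lincomb[OF finJ finY cm(2,3) d sp])
  then obtain \<beta> where \<beta>: "\<beta> \<in> Y \<rightarrow> carrier R"
    and \<beta>_eq: "\<forall>r\<in>T. finsum R (\<lambda>j. d j \<otimes> C r j) J = finsum R (\<lambda>y. \<beta> y \<otimes> B r y) Y"
    unfolding inspan_def by blast
  define \<gamma> where "\<gamma> z = (case z of Inl x \<Rightarrow> (if x \<in> I then c x else \<zero>) | Inr y \<Rightarrow> \<beta> y)" for z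
  have \<gamma>: "\<gamma> \<in> (X <+> Y) \<rightarrow> carrier R" using c \<beta> unfolding \<gamma>_def by auto
  have "\<forall>r\<in>T. finsum R (\<lambda>z. \<gamma> z \<otimes> mat_concat A B r z) (X <+> Y) = \<zero>"
  proof
    fix r assume r: "r \<in> T"
    have "finsum R (\<lambda>z. \<gamma> z \<otimes> mat_concat A B r z) (X <+> Y)
        = finsum R (\<lambda>x. (if x \<in> I then c x else \<zero>) \<otimes> A r x) X \<oplus> finsum R (\<lambda>y. \<beta> y \<otimes> B r y) Y"
      using lincomb_concat[OF finX finY cm(1,2) \<gamma>] by (simp add: \<gamma>_def)
    also have "\<dots> = finsum R (\<lambda>i. c i \<otimes> A r i) I \<oplus> finsum R (\<lambda>j. d j \<otimes> C r j) J"
      using \<beta>_eq r lincomb_zero_ext[OF finX IX c cm(1)] by simp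
    finally show "finsum R (\<lambda>z. \<gamma> z \<otimes> mat_concat A B r z) (X <+> Y) = \<zero>" using z r by simp
  qed
  with ind \<gamma> have "\<gamma> (Inl i) = \<zero>" using i IX unfolding cols_indep_def by blast
  then show "c i = \<zero>" using i by (simp add: \<gamma>_def)
qed

lemma decodes_left_unique:
  assumes dec: "decodes_left R T A I B J" and finI: "finite I" and finJ: "finite J"
    and cm: "cmat R A" "cmat R B"
    and U1: "U1 \<in> I \<rightarrow> carrier R" "U1' \<in> I \<rightarrow> carrier R"
    and U2: "U2 \<in> J \<rightarrow> carrier R" "U2' \<in> J \<rightarrow> carrier R"
    and eq: "\<forall>r\<in>T. finsum R (\<lambda>i. U1 i \<otimes> A r i) I \<oplus> finsum R (\<lambda>j. U2 j \<otimes> B r j) J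
                 = finsum R (\<lambda>i. U1' i \<otimes> A r i) I \<oplus> finsum R (\<lambda>j. U2' j \<otimes> B r j) J"
  shows "\<forall>i\<in>I. U1 i = U1' i"
proof -
  let ?d1 = "\<lambda>i. U1 i \<ominus> U1' i" and ?d2 = "\<lambda>j. U2 j \<ominus> U2' j"
  have "finsum R (\<lambda>i. ?d1 i \<otimes> A r i) I \<oplus> finsum R (\<lambda>j. ?d2 j \<otimes> B r j) J = \<zero>"
    if r: "r \<in> T" for r
  proof -
    have cA: "(\<lambda>i. A r i) \<in> I \<rightarrow> carrier R" and cB: "(\<lambda>j. B r j) \<in> J \<rightarrow> carrier R"
      using cm by (auto simp: cmat_def)
    let ?a = "finsum R (\<lambda>i. U1 i \<otimes> A r i) I" and ?a' = "finsum R (\<lambda>i. U1' i \<otimes> A r i) I"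
    let ?b = "finsum R (\<lambda>j. U2 j \<otimes> B r j) J" and ?b' = "finsum R (\<lambda>j. U2' j \<otimes> B r j) J"
    have c: "?a \<in> carrier R" "?a' \<in> carrier R" "?b \<in> carrier R" "?b' \<in> carrier R"
      using U1 U2 cA cB by (auto intro!: finsum_closed)
    have "(?a \<ominus> ?a') \<oplus> (?b \<ominus> ?b') = (?a \<oplus> ?b) \<ominus> (?a' \<oplus> ?b')"
      using c by (simp add: minus_eq minus_add a_ac)
    also have "\<dots> = \<zero>" using eq r c by simp
    finally show ?thesis using finsum_diff[OF finI U1 cA] finsum_diff[OF finJ U2 cB] by simp
  qed
  moreover have "?d1 \<in> I \<rightarrow> carrier R" "?d2 \<in> J \<rightarrow> carrier R" using U1 U2 by auto
  ultimately have "\<forall>i\<in>I. ?d1 i = \<zero>"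
    using dec[unfolded decodes_left_def, rule_format, of ?d1 ?d2] by blast
  then show ?thesis using U1 by (auto simp: Pi_iff)
qed

lemma decodes_left_reindex:
  assumes dec: "decodes_left R T A Q B P" and q: "bij_betw q I Q" and p: "bij_betw p J P"
    and cm: "cmat R A" "cmat R B"
    and A': "\<forall>r\<in>T. \<forall>i\<in>I. A' r i = A r (q i)" and B': "\<forall>r\<in>T. \<forall>j\<in>J. B' r j = B r (p j)"
  shows "decodes_left R T A' I B' J"
  unfolding decodes_left_def
proof (intro ballI impI)
  fix c d i assume c: "c \<in> I \<rightarrow> carrier R" and d: "d \<in> J \<rightarrow> carrier R" and i: "i \<in> I"
    and z: "\<forall>r\<in>T. finsum R (\<lambda>i. c i \<otimes> A' r i) I \<oplus> finsum R (\<lambda>j. d j \<otimes> B' r j) J = \<zero>"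
  have qi: "inj_on q I" "Q = q ` I" and pi: "inj_on p J" "P = p ` J"
    using q p by (auto simp: bij_betw_def)
  define c' where "c' e = c (the_inv_into I q e)" for e
  define d' where "d' e = d (the_inv_into J p e)" for e
  have c': "c' \<in> Q \<rightarrow> carrier R" and d': "d' \<in> P \<rightarrow> carrier R"
    using c d qi pi by (auto simp: c'_def d'_def the_inv_into_f_f)
  have "finsum R (\<lambda>e. c' e \<otimes> A r e) Q \<oplus> finsum R (\<lambda>e. d' e \<otimes> B r e) P = \<zero>" if r: "r \<in> T" for r
  proof -
    have "finsum R (\<lambda>e. c' e \<otimes> A r e) Q = finsum R (\<lambda>i. c i \<otimes> A' r i) I"
      unfolding qi(2) lincomb_reindex[OF qi(1) c'[unfolded qi(2)] cm(1)]
      using qi c A' r cm by (intro finsum_cong') (auto simp: c'_def the_inv_into_f_f cmat_def)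
    moreover have "finsum R (\<lambda>e. d' e \<otimes> B r e) P = finsum R (\<lambda>j. d j \<otimes> B' r j) J"
      unfolding pi(2) lincomb_reindex[OF pi(1) d'[unfolded pi(2)] cm(2)]
      using pi d B' r cm by (intro finsum_cong') (auto simp: d'_def the_inv_into_f_f cmat_def)
    ultimately show ?thesis using z r by simp
  qed
  with dec c' d' have "c' (q i) = \<zero>" using i qi unfolding decodes_left_def by blast
  then show "c i = \<zero>" using i qi by (simp add: c'_def the_inv_into_f_f)
qed

end

subsection \<open>Decoding at t2: the interference of s1 is confined to a known subspace\<close>

context field
begin

text \<open>If the columns N of H M are independent and as many as rank H, they span every column
  of H (their span lies inside the column space of H and has full dimension).\<close>
lemma columns_in_span_of_product:
  assumes finK: "finite (carrier R)" and finC: "finite C" and finN: "finite N"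
    and cm: "cmat R H" "cmat R M"
    and ind: "cols_indep R T (mat_mult R H C M) N" and rank: "mat_rank R T C H = card N"
  shows "\<forall>e\<in>C. inspan R T (mat_mult R H C M) N (\<lambda>r. H r e)"
proof
  fix e assume e: "e \<in> C"
  define G where "G = mat_mult R H C M"
  have cmG: "cmat R G" unfolding G_def by (rule cmat_mult[OF cm])
  obtain Bb where Bb: "Bb \<subseteq> C" "cols_indep R T H Bb" "\<forall>c\<in>C. inspan R T H Bb (\<lambda>r. H r c)"
    using basis_exists[OF finC _ cols_indep_empty cm(1)] by blast
  have fBb: "finite Bb" using Bb finC finite_subset by blast
  have cBb: "card Bb \<le> card N" using rank_le[OF finC Bb(1,2)] rank by simp
  have G_sp: "inspan R T H Bb (\<lambda>r. G r i)" for i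
  proof -
    have "inspan R T H Bb (\<lambda>r. finsum R (\<lambda>e'. M e' i \<otimes> H r e') C)"
      using cm by (intro inspan_lincomb[OF finC fBb cm(1) cm(1) _ Bb(3)]) (auto simp: cmat_def)
    moreover have "finsum R (\<lambda>e'. M e' i \<otimes> H r e') C = G r i" for r
      unfolding G_def mat_mult_def using cm by (intro finsum_cong') (auto simp: cmat_def m_comm)
    ultimately show ?thesis by simp
  qed
  show "inspan R T (mat_mult R H C M) N (\<lambda>r. H r e)"
  proof (rule ccontr)
    assume nsp: "\<not> inspan R T (mat_mult R H C M) N (\<lambda>r. H r e)"
    define Z where "Z = mat_concat G H"
    have cmZ: "cmat R Z" unfolding Z_def using cmG cm(1) by (rule cmat_concat)
    have indN: "cols_indep R T Z (N <+> {})"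
      unfolding Z_def using ind cols_indep_concat_left[OF cmG cm(1)] by (simp add: G_def)
    have "cols_indep R T Z (insert (Inr e) (N <+> {}))"
    proof (rule ccontr)
      assume "\<not> cols_indep R T Z (insert (Inr e) (N <+> {}))"
      from inspan_of_dependent_insert[OF _ indN _ this cmZ] finN
      have "inspan R T Z (N <+> {}) (\<lambda>r. Z r (Inr e))" by auto
      then show False using nsp inspan_concat_left[OF cmG cm(1)]
        by (simp add: Z_def G_def mat_concat_def)
    qed
    moreover have "insert (Inr e) (N <+> {}) = N <+> {e}" by auto
    ultimately have indZ: "cols_indep R T Z (N <+> {e})" by simp
    have "\<forall>x\<in>N <+> {e}. inspan R T H Bb (\<lambda>r. Z r x)"
      using G_sp Bb(3) e by (auto simp: Z_def mat_concat_def)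
    then have "card (N <+> {e}) \<le> card Bb"
      using finN by (intro card_indep_le_spanning[OF finK _ fBb indZ _ cm(1) cmZ]) auto
    then show False using cBb finN by (simp add: card_Plus)
  qed
qed

lemma decodes_at_second_terminal:
  assumes finK: "finite (carrier R)" and finO1: "finite O1"
    and cm: "cmat R H21" "cmat R M1" "cmat R J"
    and rank21: "mat_rank R T O1 H21 = n1"
    and full: "mat_rank R T ({..<n1} <+> {..<n2}) (mat_concat (mat_mult R H21 O1 M1) J) = n1 + n2"
    and P: "P \<subseteq> {..<n2}" and Q: "Q \<subseteq> O1"
  shows "decodes_left R T J P H21 Q"
proof -
  define G where "G = mat_mult R H21 O1 M1"
  have cmG: "cmat R G" unfolding G_def by (rule cmat_mult[OF cm(1,2)])
  have indGJ: "cols_indep R T (mat_concat G J) ({..<n1} <+> {..<n2})"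
    using full unfolding G_def by (intro rank_full) (auto simp: card_Plus)
  have "cols_indep R T (mat_concat G J) ({..<n1} <+> {})"
    by (rule cols_indep_subset[OF indGJ _ _ cmat_concat[OF cmG cm(3)]]) auto
  then have indG: "cols_indep R T G {..<n1}" using cols_indep_concat_left[OF cmG cm(3)] by blast
  have "\<forall>e\<in>O1. inspan R T G {..<n1} (\<lambda>r. H21 r e)"
    using columns_in_span_of_product[OF finK finO1 _ cm(1,2)] indG rank21 unfolding G_def by simp
  moreover have "cols_indep R T (mat_concat J G) ({..<n2} <+> {..<n1})"
    using indGJ cols_indep_concat_swap[OF cmG cm(3)] by blast
  ultimately show ?thesis
    using Q P finite_subset[OF Q finO1]
    by (intro decodes_left_by_span[of "{..<n2}" "{..<n1}" Q J G H21]) (auto simp: cm cmG)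
qed

end

subsection \<open>Decoding at t1: choosing the transmitted columns\<close>

lemma subset_with_max_overlap:
  assumes finN: "finite N" and P0: "P0 \<subseteq> N" and R2: "R2 \<le> card N"
  obtains P where "P \<subseteq> N" "card P = R2" "card (P \<inter> P0) = min R2 (card P0)"
proof (cases "R2 \<le> card P0")
  case True
  then obtain P where "P \<subseteq> P0" "card P = R2" using obtain_subset_with_card_n by metis
  then show ?thesis using that[of P] P0 True by (auto simp: Int_absorb2)
next
  case False
  have fP0: "finite P0" using P0 finN finite_subset by blast
  have "card (N - P0) = card N - card P0" using P0 fP0 by (simp add: card_Diff_subset)
  then have "R2 - card P0 \<le> card (N - P0)" using R2 by simp
  then obtain W where W: "W \<subseteq> N - P0" "card W = R2 - card P0" using obtain_subset_with_card_n by metis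
  have "card (P0 \<union> W) = card P0 + card W"
    using W fP0 finite_subset[OF W(1)] finN by (intro card_Un_disjoint) auto
  moreover have "(P0 \<union> W) \<inter> P0 = P0" by auto
  ultimately show ?thesis using that[of "P0 \<union> W"] P0 W False by auto
qed

context field
begin

lemma extend_basis_by_second_block:
  assumes finK: "finite (carrier R)" and finO1: "finite O1" and finN: "finite N"
    and cm: "cmat R A" "cmat R J"
    and Q0: "Q0 \<subseteq> O1" "cols_indep R T A Q0" and spQ0: "\<forall>e\<in>O1. inspan R T A Q0 (\<lambda>r. A r e)"
  obtains P0 where "P0 \<subseteq> N" "cols_indep R T (mat_concat A J) (Q0 <+> P0)"
    "mat_rank R T (O1 <+> N) (mat_concat A J) \<le> card Q0 + card P0"
proof -
  define D where "D = mat_concat A J"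
  have cmD: "cmat R D" unfolding D_def by (rule cmat_concat[OF cm])
  have fQ0: "finite Q0" using Q0 finO1 finite_subset by blast
  have "cols_indep R T D (Q0 <+> {})" unfolding D_def using cols_indep_concat_left[OF cm] Q0 by blast
  then obtain S where S: "Q0 <+> {} \<subseteq> S" "S \<subseteq> Q0 <+> N" "cols_indep R T D S"
      "\<forall>c\<in>Q0 <+> N. inspan R T D S (\<lambda>r. D r c)"
    using basis_exists[of "Q0 <+> N" "Q0 <+> {}" T D] fQ0 finN cmD by auto
  define P0 where "P0 = {j. Inr j \<in> S}"
  have "{x. Inl x \<in> S} = Q0" using S(1,2) by auto
  then have SP0: "S = Q0 <+> P0" unfolding P0_def using Plus_decomp[OF S(2)] by simp
  have P0: "P0 \<subseteq> N" using S(2) unfolding P0_def by auto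
  have fS: "finite S" using SP0 fQ0 finite_subset[OF P0 finN] by simp
  have "inspan R T D S (\<lambda>r. D r c)" if c: "c \<in> O1 <+> N" for c
  proof (cases c)
    case (Inl e)
    then have "inspan R T D (Q0 <+> {}) (\<lambda>r. A r e)"
      using c spQ0 inspan_concat_left[OF cm] unfolding D_def by auto
    then show ?thesis using inspan_mono[OF _ S(1) fS cmD] Inl by (simp add: D_def mat_concat_def)
  next
    case (Inr j) then show ?thesis using S(4) c by auto
  qed
  then have "mat_rank R T (O1 <+> N) D \<le> card S"
    using finO1 finN by (intro rank_le_spanning[OF finK _ fS _ cmD]) auto
  then show ?thesis
    using that[OF P0] S(3) SP0 fQ0 finite_subset[OF P0 finN] by (simp add: D_def card_Plus)
qed

lemma exchange_into_second_block:
  assumes finK: "finite (carrier R)" and fQ0: "finite Q0" and fP: "finite P" and fP0: "finite P0"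
    and cm: "cmat R A" "cmat R J"
    and ind: "cols_indep R T (mat_concat A J) (Q0 <+> P0)"
  obtains Q B where "Q \<subseteq> Q0" "B \<subseteq> P" "cols_indep R T (mat_concat A J) (Q <+> B)"
    "\<forall>p\<in>P. inspan R T J B (\<lambda>r. J r p)" "card Q0 + card (P \<inter> P0) \<le> card Q + card B"
proof -
  define D where "D = mat_concat A J"
  have cmD: "cmat R D" unfolding D_def by (rule cmat_concat[OF cm])
  have indPP0: "cols_indep R T D (Q0 <+> (P \<inter> P0))"
    unfolding D_def by (rule cols_indep_subset[OF ind _ _ cmat_concat[OF cm]]) (auto simp: fQ0 fP0)
  have "cols_indep R T D ({} <+> (P \<inter> P0))"
    by (rule cols_indep_subset[OF indPP0 _ _ cmD]) (auto simp: fQ0 fP)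
  then have "cols_indep R T J (P \<inter> P0)" unfolding D_def using cols_indep_concat_right[OF cm] by blast
  from basis_exists[OF fP Int_lower1 this cm(2)]
  obtain B where B: "P \<inter> P0 \<subseteq> B" "B \<subseteq> P" "cols_indep R T J B"
      "\<forall>p\<in>P. inspan R T J B (\<lambda>r. J r p)" by blast
  have fB: "finite B" using B(2) fP finite_subset by blast
  have "cols_indep R T D ({} <+> B)" unfolding D_def using cols_indep_concat_right[OF cm] B(3) by blast
  moreover have "finite (Q0 <+> B)" "{} <+> B \<subseteq> Q0 <+> B" using fQ0 fB by auto
  ultimately obtain S where S: "{} <+> B \<subseteq> S" "S \<subseteq> Q0 <+> B" "cols_indep R T D S"
      "\<forall>c\<in>Q0 <+> B. inspan R T D S (\<lambda>r. D r c)"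
    using basis_exists[of "Q0 <+> B" "{} <+> B" T D] cmD by blast
  define Q where "Q = {x. Inl x \<in> S}"
  have "{y. Inr y \<in> S} = B" using S(1,2) by auto
  then have SQ: "S = Q <+> B" unfolding Q_def using Plus_decomp[OF S(2)] by simp
  have QQ0: "Q \<subseteq> Q0" using S(2) unfolding Q_def by auto
  have fQ: "finite Q" using QQ0 fQ0 finite_subset by blast
  have fS: "finite S" using SQ fQ fB by simp
  have "Q0 <+> (P \<inter> P0) \<subseteq> Q0 <+> B" using B(1) by auto
  then have "\<forall>x\<in>Q0 <+> (P \<inter> P0). inspan R T D S (\<lambda>r. D r x)" using S(4) by blast
  then have "card (Q0 <+> (P \<inter> P0)) \<le> card S"
    using fQ0 fP by (intro card_indep_le_spanning[OF finK _ fS indPP0 _ cmD cmD]) simp_all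
  then have card: "card Q0 + card (P \<inter> P0) \<le> card Q + card B"
    using SQ fQ fB fQ0 fP by (simp add: card_Plus)
  have "cols_indep R T (mat_concat A J) (Q <+> B)" using S(3) SQ by (simp add: D_def)
  then show ?thesis by (rule that[OF QQ0 B(2) _ B(4) card])
qed

lemma decodable_choice_at_first_terminal:
  assumes finK: "finite (carrier R)" and finO1: "finite O1"
    and cm: "cmat R A" "cmat R J"
    and R1: "R1 \<le> mat_rank R T O1 A" and R2: "R2 \<le> n2"
    and rho: "R1 + R2 \<le> mat_rank R T (O1 <+> {..<n2}) (mat_concat A J)"
  obtains Q P where "Q \<subseteq> O1" "card Q = R1" "P \<subseteq> {..<n2}" "card P = R2"
    "decodes_left R T A Q J P"
proof -
  obtain Q0 where Q0: "Q0 \<subseteq> O1" "cols_indep R T A Q0" "\<forall>e\<in>O1. inspan R T A Q0 (\<lambda>r. A r e)"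
    using basis_exists[OF finO1 _ cols_indep_empty cm(1)] by blast
  have fQ0: "finite Q0" using Q0 finO1 finite_subset by blast
  have k: "card Q0 = mat_rank R T O1 A"
    using rank_le[OF finO1 Q0(1,2)] rank_le_spanning[OF finK finO1 fQ0 Q0(3) cm(1)] by simp
  obtain P0 where P0: "P0 \<subseteq> {..<n2}" "cols_indep R T (mat_concat A J) (Q0 <+> P0)"
      "mat_rank R T (O1 <+> {..<n2}) (mat_concat A J) \<le> card Q0 + card P0"
    using extend_basis_by_second_block[OF finK finO1 _ cm Q0] by blast
  have fP0: "finite P0" using P0(1) finite_subset by blast
  obtain P where P: "P \<subseteq> {..<n2}" "card P = R2" "card (P \<inter> P0) = min R2 (card P0)"
    using subset_with_max_overlap[of "{..<n2}" P0 R2] P0(1) R2 by auto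
  have fP: "finite P" using P(1) finite_subset by blast
  obtain Q B where QB: "Q \<subseteq> Q0" "B \<subseteq> P" "cols_indep R T (mat_concat A J) (Q <+> B)"
      "\<forall>p\<in>P. inspan R T J B (\<lambda>r. J r p)" "card Q0 + card (P \<inter> P0) \<le> card Q + card B"
    using exchange_into_second_block[OF finK fQ0 fP fP0 cm P0(2)] by blast
  have fQ: "finite Q" and fB: "finite B" using QB(1,2) fQ0 fP finite_subset by blast+
  have "card B \<le> R2" using card_mono[OF fP QB(2)] P(2) by simp
  then have "R1 \<le> card Q" using QB(5) P(3) P0(3) rho R1 k by linarith
  then obtain Q' where Q': "Q' \<subseteq> Q" "card Q' = R1" using obtain_subset_with_card_n by metis
  have "decodes_left R T A Q' J P"
    using fQ fB fP cm QB(3,4) Q' by (intro decodes_left_by_span) auto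
  then show ?thesis using that Q' QB(1) Q0(1) P(1,2) by blast
qed

end

subsection \<open>End-to-end description of a linear code\<close>

context cring
begin

lemma lincomb_through_matrix:
  assumes finC: "finite C" and finI: "finite I" and cm: "cmat R H" "cmat R M"
    and U: "U \<in> I \<rightarrow> carrier R"
  shows "finsum R (\<lambda>e. H r e \<otimes> finsum R (\<lambda>i. M e i \<otimes> U i) I) C
       = finsum R (\<lambda>i. U i \<otimes> mat_mult R H C M r i) I"
proof -
  have "H r e \<otimes> finsum R (\<lambda>i. M e i \<otimes> U i) I = finsum R (\<lambda>i. U i \<otimes> (H r e \<otimes> M e i)) I" for e
  proof -
    have "H r e \<otimes> finsum R (\<lambda>i. M e i \<otimes> U i) I = finsum R (\<lambda>i. H r e \<otimes> (M e i \<otimes> U i)) I"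
      using assms by (intro finsum_rdistr) (auto simp: cmat_def)
    also have "\<dots> = finsum R (\<lambda>i. U i \<otimes> (H r e \<otimes> M e i)) I"
      using assms by (intro finsum_cong') (auto simp: cmat_def Pi_iff m_ac)
    finally show ?thesis .
  qed
  then have "finsum R (\<lambda>e. H r e \<otimes> finsum R (\<lambda>i. M e i \<otimes> U i) I) C
      = finsum R (\<lambda>e. finsum R (\<lambda>i. U i \<otimes> (H r e \<otimes> M e i)) I) C" by simp
  also have "\<dots> = finsum R (\<lambda>i. finsum R (\<lambda>e. U i \<otimes> (H r e \<otimes> M e i)) C) I"
    using assms by (intro finsum_swap) (auto simp: cmat_def Pi_iff)
  also have "\<dots> = finsum R (\<lambda>i. U i \<otimes> mat_mult R H C M r i) I"
    unfolding mat_mult_def using assms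
    by (intro finsum_cong' refl) (auto simp: cmat_def Pi_iff intro!: finsum_rdistr[symmetric] finsum_closed)
  finally show ?thesis .
qed

lemma received_symbols:
  assumes finO1: "finite O1" and finO2: "finite O2"
    and tO1: "\<forall>e\<in>O1. tail e = s1" and tO2: "\<forall>e\<in>O2. tail e = s2" and s12: "s1 \<noteq> s2"
    and cm: "cmat R H1" "cmat R H2" "cmat R M1" "cmat R M2"
    and U1: "U1 \<in> {..<R1} \<rightarrow> carrier R" and U2: "U2 \<in> {..<R2} \<rightarrow> carrier R"
  defines "Y \<equiv> src_symbols R tail s1 s2 R1 R2 M1 M2 U1 U2"
  shows "finsum R (\<lambda>e. H1 r e \<otimes> Y e) O1 \<oplus> finsum R (\<lambda>e. H2 r e \<otimes> Y e) O2
       = finsum R (\<lambda>i. U1 i \<otimes> mat_mult R H1 O1 M1 r i) {..<R1}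
         \<oplus> finsum R (\<lambda>j. U2 j \<otimes> mat_mult R H2 O2 M2 r j) {..<R2}"
proof -
  have "finsum R (\<lambda>e. H1 r e \<otimes> Y e) O1
      = finsum R (\<lambda>e. H1 r e \<otimes> finsum R (\<lambda>i. M1 e i \<otimes> U1 i) {..<R1}) O1"
    using tO1 cm U1 by (intro finsum_cong') (auto simp: Y_def src_symbols_def cmat_def Pi_iff intro!: finsum_closed)
  moreover have "finsum R (\<lambda>e. H2 r e \<otimes> Y e) O2
      = finsum R (\<lambda>e. H2 r e \<otimes> finsum R (\<lambda>j. M2 e j \<otimes> U2 j) {..<R2}) O2"
    using tO2 s12 cm U2 by (intro finsum_cong') (auto simp: Y_def src_symbols_def cmat_def Pi_iff intro!: finsum_closed)
  ultimately show ?thesis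
    using lincomb_through_matrix[OF finO1 _ cm(1,3) U1] lincomb_through_matrix[OF finO2 _ cm(2,4) U2]
    by simp
qed

lemma mat_mult_selection:
  assumes "finite C" "q i \<in> C" "cmat R H"
  shows "mat_mult R H C (\<lambda>e i. if e = q i then \<one> else \<zero>) r i = H r (q i)"
proof -
  have "mat_mult R H C (\<lambda>e i. if e = q i then \<one> else \<zero>) r i
      = finsum R (\<lambda>e. if q i = e then H r e else \<zero>) C"
    unfolding mat_mult_def using assms by (intro finsum_cong') (auto simp: cmat_def)
  also have "\<dots> = H r (q i)" using assms by (intro finsum_singleton) (auto simp: cmat_def)
  finally show ?thesis .
qed

lemma received_at_terminals:
  assumes net: "two_unicast_net V E tail head s1 s2 t1 t2"
    and cm: "cmat R H11" "cmat R H12" "cmat R H21" "cmat R H22" "cmat R M1" "cmat R M2"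
    and chan: "channel_matrices R E tail head s1 s2 t1 t2 beta H11 H12 H21 H22"
    and U1: "U1 \<in> {..<R1} \<rightarrow> carrier R" and U2: "U2 \<in> {..<R2} \<rightarrow> carrier R"
    and nf: "net_flow R E tail head {s1, s2} beta (src_symbols R tail s1 s2 R1 R2 M1 M2 U1 U2) x"
  shows "\<forall>r\<in>In_edges E head t1.
           x r = finsum R (\<lambda>i. U1 i \<otimes> mat_mult R H11 (Out_edges E tail s1) M1 r i) {..<R1}
               \<oplus> finsum R (\<lambda>j. U2 j \<otimes> mat_mult R H12 (Out_edges E tail s2) M2 r j) {..<R2}"
      (is ?at_t1)
    and "\<forall>r\<in>In_edges E head t2.
           x r = finsum R (\<lambda>j. U2 j \<otimes> mat_mult R H22 (Out_edges E tail s2) M2 r j) {..<R2}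
               \<oplus> finsum R (\<lambda>i. U1 i \<otimes> mat_mult R H21 (Out_edges E tail s1) M1 r i) {..<R1}"
      (is ?at_t2)
proof -
  let ?O1 = "Out_edges E tail s1" and ?O2 = "Out_edges E tail s2"
  have fO: "finite ?O1" "finite ?O2" and s12: "s1 \<noteq> s2"
    using net unfolding two_unicast_net_def Out_edges_def by auto
  have tO: "\<forall>e\<in>?O1. tail e = s1" "\<forall>e\<in>?O2. tail e = s2" by (auto simp: Out_edges_def)
  have "src_symbols R tail s1 s2 R1 R2 M1 M2 U1 U2 e \<in> carrier R" for e
    using U1 U2 cm unfolding src_symbols_def by (auto intro!: finsum_closed simp: Pi_iff cmat_def)
  note H = chan[unfolded channel_matrices_def, rule_format, OF this nf]
  note rs = received_symbols[OF fO tO s12 _ _ cm(5,6) U1 U2]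
  have "cmat R (mat_mult R H21 ?O1 M1)" "cmat R (mat_mult R H22 ?O2 M2)"
    using cm by (auto intro: cmat_mult)
  then have "finsum R (\<lambda>i. U1 i \<otimes> mat_mult R H21 ?O1 M1 r i) {..<R1} \<in> carrier R"
       "finsum R (\<lambda>j. U2 j \<otimes> mat_mult R H22 ?O2 M2 r j) {..<R2} \<in> carrier R" for r
    using U1 U2 by (auto intro!: finsum_closed simp: cmat_def Pi_iff)
  then show ?at_t1 ?at_t2
    using H rs[OF cm(1,2)] rs[OF cm(3,4)] by (simp_all add: a_comm)
qed

lemma linear_code_decodes:
  assumes net: "two_unicast_net V E tail head s1 s2 t1 t2"
    and cm: "cmat R H11" "cmat R H12" "cmat R H21" "cmat R H22" "cmat R M1" "cmat R M2"
    and chan: "channel_matrices R E tail head s1 s2 t1 t2 beta H11 H12 H21 H22"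
    and dec1: "decodes_left R (In_edges E head t1)
                 (mat_mult R H11 (Out_edges E tail s1) M1) {..<R1}
                 (mat_mult R H12 (Out_edges E tail s2) M2) {..<R2}"
    and dec2: "decodes_left R (In_edges E head t2)
                 (mat_mult R H22 (Out_edges E tail s2) M2) {..<R2}
                 (mat_mult R H21 (Out_edges E tail s1) M1) {..<R1}"
  shows "decodes R E tail head s1 s2 t1 t2 R1 R2 beta M1 M2"
  unfolding decodes_def
proof (intro allI impI)
  have cmG: "cmat R (mat_mult R H11 (Out_edges E tail s1) M1)"
    "cmat R (mat_mult R H12 (Out_edges E tail s2) M2)"
    "cmat R (mat_mult R H21 (Out_edges E tail s1) M1)"
    "cmat R (mat_mult R H22 (Out_edges E tail s2) M2)"
    using cm by (auto intro: cmat_mult)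
  fix U1 U2 U1' U2' x x'
  assume U: "U1 \<in> {..<R1} \<rightarrow> carrier R" "U2 \<in> {..<R2} \<rightarrow> carrier R"
    "U1' \<in> {..<R1} \<rightarrow> carrier R" "U2' \<in> {..<R2} \<rightarrow> carrier R"
    and nf: "net_flow R E tail head {s1, s2} beta (src_symbols R tail s1 s2 R1 R2 M1 M2 U1 U2) x"
    and nf': "net_flow R E tail head {s1, s2} beta (src_symbols R tail s1 s2 R1 R2 M1 M2 U1' U2') x'"
  note r = received_at_terminals[OF net cm chan U(1,2) nf]
    and r' = received_at_terminals[OF net cm chan U(3,4) nf']
  show "((\<forall>e\<in>In_edges E head t1. x e = x' e) \<longrightarrow> (\<forall>i<R1. U1 i = U1' i)) \<and>
        ((\<forall>e\<in>In_edges E head t2. x e = x' e) \<longrightarrow> (\<forall>j<R2. U2 j = U2' j))"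
  proof (intro conjI impI)
    assume "\<forall>e\<in>In_edges E head t1. x e = x' e"
    then show "\<forall>i<R1. U1 i = U1' i"
      using decodes_left_unique[OF dec1 _ _ cmG(1,2) U(1,3) U(2,4)] r(1) r'(1) by simp
  next
    assume "\<forall>e\<in>In_edges E head t2. x e = x' e"
    then show "\<forall>j<R2. U2 j = U2' j"
      using decodes_left_unique[OF dec2 _ _ cmG(4,3) U(2,4) U(1,3)] r(2) r'(2) by simp
  qed
qed

lemma selection_code_decodes:
  assumes net: "two_unicast_net V E tail head s1 s2 t1 t2"
    and cm: "cmat R H11" "cmat R H12" "cmat R H21" "cmat R H22" "cmat R M2"
    and chan: "channel_matrices R E tail head s1 s2 t1 t2 beta H11 H12 H21 H22"
    and q: "bij_betw q {..<R1} Q" and Q: "Q \<subseteq> Out_edges E tail s1" and p: "bij_betw p {..<R2} P"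
    and dec1: "decodes_left R (In_edges E head t1) H11 Q (mat_mult R H12 (Out_edges E tail s2) M2) P"
    and dec2: "decodes_left R (In_edges E head t2) (mat_mult R H22 (Out_edges E tail s2) M2) P H21 Q"
  shows "decodes R E tail head s1 s2 t1 t2 R1 R2 beta
           (\<lambda>e i. if e = q i then \<one> else \<zero>) (\<lambda>e j. M2 e (p j))"
proof (rule linear_code_decodes[OF net cm(1-4) _ _ chan])
  let ?O1 = "Out_edges E tail s1" and ?O2 = "Out_edges E tail s2"
  let ?M1 = "\<lambda>e i. if e = q i then \<one> else \<zero>" and ?M2 = "\<lambda>e j. M2 e (p j)"
  have fO1: "finite ?O1" using net unfolding two_unicast_net_def Out_edges_def by auto
  have qO1: "q i \<in> ?O1" if "i < R1" for i using q Q that by (auto simp: bij_betw_def)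
  have cmJ: "cmat R (mat_mult R H12 ?O2 M2)" "cmat R (mat_mult R H22 ?O2 M2)"
    using cm by (auto intro: cmat_mult)
  note sel = mat_mult_selection[where q=q, OF fO1 qO1]
  show "cmat R ?M1" "cmat R ?M2" using cm(5) by (auto simp: cmat_def)
  show "decodes_left R (In_edges E head t1) (mat_mult R H11 ?O1 ?M1) {..<R1}
      (mat_mult R H12 ?O2 ?M2) {..<R2}"
    using sel[OF _ cm(1)] by (intro decodes_left_reindex[OF dec1 q p cm(1) cmJ(1)])
      (simp_all, simp add: mat_mult_def)
  show "decodes_left R (In_edges E head t2) (mat_mult R H22 ?O2 ?M2) {..<R2}
      (mat_mult R H21 ?O1 ?M1) {..<R1}"
    using sel[OF _ cm(3)] by (intro decodes_left_reindex[OF dec2 p q cmJ(2) cm(3)])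
      (simp add: mat_mult_def, simp_all)
qed

end

subsection \<open>Moving a code to a field carried by natural numbers\<close>

text \<open>The copy
  K is built so that its multiplication is total (it never leaves the carrier) and is respected
  by the isomorphism even outside the carrier; this lets flows over K be transported to F
  without knowing beforehand that their values lie in the carrier.\<close>
lemma finite_field_copy_on_nat:
  fixes F :: "('a, 'm) ring_scheme"
  assumes fF: "field F" and finF: "finite (carrier F)"
  obtains K :: "nat ring" and \<psi> where "field K" "finite (carrier K)" "\<psi> \<in> ring_iso K F"
    "\<forall>a b. a \<otimes>\<^bsub>K\<^esub> b \<in> carrier K" "\<forall>a b. \<psi> (a \<otimes>\<^bsub>K\<^esub> b) = \<psi> a \<otimes>\<^bsub>F\<^esub> \<psi> b"
proof -
  interpret F: field F by (rule fF)
  obtain \<phi> :: "'a \<Rightarrow> nat" and n where phi: "\<phi> ` carrier F = {i. i < n}" "inj_on \<phi> (carrier F)"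
    using finite_imp_inj_to_nat_seg[OF finF] by blast
  define \<psi> where "\<psi> b = (if b \<in> \<phi> ` carrier F then inv_into (carrier F) \<phi> b else \<zero>\<^bsub>F\<^esub>)" for b
  define K :: "nat ring" where "K = \<lparr>carrier = \<phi> ` carrier F,
      mult = (\<lambda>x y. \<phi> (\<psi> x \<otimes>\<^bsub>F\<^esub> \<psi> y)), one = \<phi> \<one>\<^bsub>F\<^esub>, zero = \<phi> \<zero>\<^bsub>F\<^esub>,
      add = (\<lambda>x y. \<phi> (\<psi> x \<oplus>\<^bsub>F\<^esub> \<psi> y))\<rparr>"
  have psi_phi: "\<psi> (\<phi> a) = a" if "a \<in> carrier F" for a
    using that phi(2) unfolding \<psi>_def by (auto intro: inv_into_f_f)
  have psi_c: "\<psi> b \<in> carrier F" for b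
    unfolding \<psi>_def by (auto intro: inv_into_into)
  have iso: "\<phi> \<in> ring_iso F K"
  proof (rule ring_iso_memI)
    show "bij_betw \<phi> (carrier F) (carrier K)" using phi(2) by (simp add: K_def bij_betw_def)
  qed (auto simp: K_def psi_phi)
  have "field (K\<lparr>zero := \<phi> \<zero>\<^bsub>F\<^esub>\<rparr>)" by (rule F.ring_iso_imp_img_field[OF iso])
  moreover have "K\<lparr>zero := \<phi> \<zero>\<^bsub>F\<^esub>\<rparr> = K" by (simp add: K_def)
  ultimately have fK: "field K" by simp
  have "\<psi> \<in> ring_iso K F"
  proof (rule ring_iso_memI)
    have "bij_betw (inv_into (carrier F) \<phi>) (carrier K) (carrier F)"
      using phi(2) by (simp add: K_def bij_betw_inv_into inj_on_imp_bij_betw)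
    then show "bij_betw \<psi> (carrier K) (carrier F)"
      by (rule bij_betw_cong[THEN iffD1, rotated]) (simp add: K_def \<psi>_def)
  qed (auto simp: K_def psi_phi psi_c)
  moreover have "finite (carrier K)" using finF by (simp add: K_def)
  moreover have "\<forall>a b. a \<otimes>\<^bsub>K\<^esub> b \<in> carrier K" "\<forall>a b. \<psi> (a \<otimes>\<^bsub>K\<^esub> b) = \<psi> a \<otimes>\<^bsub>F\<^esub> \<psi> b"
    by (auto simp: K_def psi_phi psi_c)
  ultimately show ?thesis using that fK by blast
qed

text \<open>Decodability is preserved when the code is transported along such an isomorphism:
  the isomorphism maps network flows over K to network flows over F and is injective.\<close>
lemma decodes_transfer:
  assumes fK: "field K" and fF: "field F" and iso: "\<psi> \<in> ring_iso K F"
    and mult_total: "\<forall>a b. a \<otimes>\<^bsub>K\<^esub> b \<in> carrier K"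
    and mult_hom: "\<forall>a b. \<psi> (a \<otimes>\<^bsub>K\<^esub> b) = \<psi> a \<otimes>\<^bsub>F\<^esub> \<psi> b"
    and img: "\<forall>e e'. \<psi> (betaK e e') = beta e e'" "\<forall>e r. \<psi> (M1K e r) = M1 e r"
      "\<forall>e r. \<psi> (M2K e r) = M2 e r"
    and dec: "decodes F E tail head s1 s2 t1 t2 R1 R2 beta M1 M2"
  shows "decodes K E tail head s1 s2 t1 t2 R1 R2 betaK M1K M2K"
proof -
  interpret K: field K by (rule fK)
  interpret F: field F by (rule fF)
  interpret hom: ring_hom_cring K F \<psi>
    using iso by (intro ring_hom_cringI K.is_cring F.is_cring) (simp add: ring_iso_def)
  have inj: "inj_on \<psi> (carrier K)" using iso by (simp add: ring_iso_def bij_betw_def)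
  let ?src = "src_symbols K tail s1 s2 R1 R2 M1K M2K"
  let ?srcF = "src_symbols F tail s1 s2 R1 R2 M1 M2"
  have src: "\<psi> (?src U1 U2 e) = ?srcF (\<lambda>r. \<psi> (U1 r)) (\<lambda>r. \<psi> (U2 r)) e" for U1 U2 e
    using img mult_total mult_hom by (simp add: src_symbols_def hom.hom_finsum Pi_iff comp_def)
  have flow: "net_flow F E tail head {s1, s2} beta
        (?srcF (\<lambda>r. \<psi> (U1 r)) (\<lambda>r. \<psi> (U2 r))) (\<lambda>e. \<psi> (x e))"
    if nf: "net_flow K E tail head {s1, s2} betaK (?src U1 U2) x" for U1 U2 x
    using nf img mult_total mult_hom unfolding net_flow_def
    by (simp add: src hom.hom_finsum Pi_iff comp_def)
  show ?thesis unfolding decodes_def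
  proof (intro allI impI)
    fix U1 U2 U1' U2' x x'
    assume U: "U1 \<in> {..<R1} \<rightarrow> carrier K" "U2 \<in> {..<R2} \<rightarrow> carrier K"
      "U1' \<in> {..<R1} \<rightarrow> carrier K" "U2' \<in> {..<R2} \<rightarrow> carrier K"
      and nf: "net_flow K E tail head {s1, s2} betaK (?src U1 U2) x"
      and nf': "net_flow K E tail head {s1, s2} betaK (?src U1' U2') x'"
    have "((\<forall>e\<in>In_edges E head t1. \<psi> (x e) = \<psi> (x' e)) \<longrightarrow> (\<forall>r<R1. \<psi> (U1 r) = \<psi> (U1' r))) \<and>
          ((\<forall>e\<in>In_edges E head t2. \<psi> (x e) = \<psi> (x' e)) \<longrightarrow> (\<forall>r<R2. \<psi> (U2 r) = \<psi> (U2' r)))"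
      using dec[unfolded decodes_def, rule_format, OF _ _ _ _ flow[OF nf] flow[OF nf']] U
      by (auto simp: Pi_iff)
    then show "((\<forall>e\<in>In_edges E head t1. x e = x' e) \<longrightarrow> (\<forall>r<R1. U1 r = U1' r)) \<and>
          ((\<forall>e\<in>In_edges E head t2. x e = x' e) \<longrightarrow> (\<forall>r<R2. U2 r = U2' r))"
      using U inj by (auto simp: Pi_iff inj_on_def)
  qed
qed

lemma achievable_of_decodes:
  assumes fF: "field F" and finF: "finite (carrier F)"
    and cF: "\<forall>e e'. beta e e' \<in> carrier F" "\<forall>e r. M1 e r \<in> carrier F" "\<forall>e r. M2 e r \<in> carrier F"
    and dec: "decodes F E tail head s1 s2 t1 t2 R1 R2 beta M1 M2"
  shows "achievable E tail head s1 s2 t1 t2 R1 R2"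
proof -
  obtain K :: "nat ring" and \<psi> where K: "field K" "finite (carrier K)" "\<psi> \<in> ring_iso K F"
      "\<forall>a b. a \<otimes>\<^bsub>K\<^esub> b \<in> carrier K" "\<forall>a b. \<psi> (a \<otimes>\<^bsub>K\<^esub> b) = \<psi> a \<otimes>\<^bsub>F\<^esub> \<psi> b"
    using finite_field_copy_on_nat[OF fF finF] by blast
  define \<phi> where "\<phi> = inv_into (carrier K) \<psi>"
  have bij: "bij_betw \<psi> (carrier K) (carrier F)" using K(3) by (simp add: ring_iso_def)
  have \<phi>: "\<phi> a \<in> carrier K" "\<psi> (\<phi> a) = a" if "a \<in> carrier F" for a
    using that bij unfolding \<phi>_def bij_betw_def by (auto intro: inv_into_into f_inv_into_f)
  let ?betaK = "\<lambda>e e'. \<phi> (beta e e')" and ?M1K = "\<lambda>e r. \<phi> (M1 e r)" and ?M2K = "\<lambda>e r. \<phi> (M2 e r)"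
  have "decodes K E tail head s1 s2 t1 t2 R1 R2 ?betaK ?M1K ?M2K"
    using cF \<phi> by (intro decodes_transfer[OF K(1) fF K(3-5) _ _ _ dec]) auto
  moreover have "\<forall>e e'. ?betaK e e' \<in> carrier K" "\<forall>e r. ?M1K e r \<in> carrier K"
    "\<forall>e r. ?M2K e r \<in> carrier K" using cF \<phi> by auto
  ultimately show ?thesis unfolding achievable_iff_decodes using K(1,2)
    by (intro exI[of _ K] conjI exI[of _ ?betaK] exI[of _ ?M1K] exI[of _ ?M2K]) auto
qed

theorem theorem3:
  fixes V :: "'v set" and E :: "'e set" and tail head :: "'e \<Rightarrow> 'v" and s1 s2 t1 t2 :: 'v
    and F :: "'a ring" and beta H11 H12 H21 H22 :: "'e \<Rightarrow> 'e \<Rightarrow> 'a"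
    and M1 M2 :: "'e \<Rightarrow> nat \<Rightarrow> 'a"
  defines "k1_1 \<equiv> min_cut E tail head {s1} {t1}"
      and "k1_2 \<equiv> min_cut E tail head {s1} {t2}"
      and "k2_1 \<equiv> min_cut E tail head {s2} {t1}"
      and "k2_2 \<equiv> min_cut E tail head {s2} {t2}"
      and "k12_1 \<equiv> min_cut E tail head {s1, s2} {t1}"
      and "k12_2 \<equiv> min_cut E tail head {s1, s2} {t2}"
      and "k1_12 \<equiv> min_cut E tail head {s1} {t1, t2}"
      and "k2_12 \<equiv> min_cut E tail head {s2} {t1, t2}"
      and "R1s \<equiv> min_cut E tail head {s1} {t2}"
      and "R2s \<equiv> min (min_cut E tail head {s1, s2} {t1}) (min_cut E tail head {s1, s2} {t2})
                      - min_cut E tail head {s1} {t2}"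
  assumes net: "two_unicast_net V E tail head s1 s2 t1 t2"
    and out_s1: "card (Out_edges E tail s1) = k1_12"
    and out_s2: "card (Out_edges E tail s2) = k2_12"
    and in_t1: "card (In_edges E head t1) = k12_1"
    and in_t2: "card (In_edges E head t2) = k12_2"
    and cond1: "k1_2 + k2_1 \<ge> min k12_1 k12_2"
    and cond2: "k1_2 \<le> k1_1"
    and field_F: "field F" and finite_F: "finite (carrier F)"
    and beta_carrier: "\<forall>e e'. beta e e' \<in> carrier F"
    and H_carrier: "\<forall>e e'. H11 e e' \<in> carrier F \<and> H12 e e' \<in> carrier F \<and>
                            H21 e e' \<in> carrier F \<and> H22 e e' \<in> carrier F"
    and H_def: "\<forall>Y x. (\<forall>e. Y e \<in> carrier F) \<longrightarrow> net_flow F E tail head {s1, s2} beta Y x \<longrightarrow>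
        (\<forall>e\<in>In_edges E head t1. x e =
            finsum F (\<lambda>e'. H11 e e' \<otimes>\<^bsub>F\<^esub> Y e') (Out_edges E tail s1) \<oplus>\<^bsub>F\<^esub>
            finsum F (\<lambda>e'. H12 e e' \<otimes>\<^bsub>F\<^esub> Y e') (Out_edges E tail s2)) \<and>
        (\<forall>e\<in>In_edges E head t2. x e =
            finsum F (\<lambda>e'. H21 e e' \<otimes>\<^bsub>F\<^esub> Y e') (Out_edges E tail s1) \<oplus>\<^bsub>F\<^esub>
            finsum F (\<lambda>e'. H22 e e' \<otimes>\<^bsub>F\<^esub> Y e') (Out_edges E tail s2))"
    and rank_H11: "mat_rank F (In_edges E head t1) (Out_edges E tail s1) H11 = k1_1"
    and rank_H12: "mat_rank F (In_edges E head t1) (Out_edges E tail s2) H12 = k2_1"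
    and rank_H21: "mat_rank F (In_edges E head t2) (Out_edges E tail s1) H21 = k1_2"
    and rank_H22: "mat_rank F (In_edges E head t2) (Out_edges E tail s2) H22 = k2_2"
    and rank_H1: "mat_rank F (In_edges E head t1) (Out_edges E tail s1 <+> Out_edges E tail s2)
                    (mat_concat H11 H12) = k12_1"
    and rank_H2: "mat_rank F (In_edges E head t2) (Out_edges E tail s1 <+> Out_edges E tail s2)
                    (mat_concat H21 H22) = k12_2"
    and M_carrier: "\<forall>e r. M1 e r \<in> carrier F \<and> M2 e r \<in> carrier F"
    and rank_M1: "mat_rank F (Out_edges E tail s1) {..<R1s} M1 = R1s"
    and rank_M2: "mat_rank F (Out_edges E tail s2) {..<R2s} M2 = R2s"
    and dec_t1: "mat_rank F (In_edges E head t1) ({..<R1s} <+> {..<R2s})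
                   (mat_concat (mat_mult F H11 (Out_edges E tail s1) M1)
                               (mat_mult F H12 (Out_edges E tail s2) M2)) = R1s + R2s"
    and dec_t2: "mat_rank F (In_edges E head t2) ({..<R1s} <+> {..<R2s})
                   (mat_concat (mat_mult F H21 (Out_edges E tail s1) M1)
                               (mat_mult F H22 (Out_edges E tail s2) M2)) = R1s + R2s"
  shows "\<forall>R1 R2::nat. R1 \<le> k1_1 \<longrightarrow> R2 \<le> min k12_1 k12_2 - k1_2 \<longrightarrow>
           R1 + R2 \<le> mat_rank F (In_edges E head t1) (Out_edges E tail s1 <+> {..<R2s})
                       (mat_concat H11 (mat_mult F H12 (Out_edges E tail s2) M2)) \<longrightarrow>
           achievable E tail head s1 s2 t1 t2 R1 R2"
proof (intro allI impI)
  fix R1 R2 :: nat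
  assume hR1: "R1 \<le> k1_1" and hR2: "R2 \<le> min k12_1 k12_2 - k1_2"
    and hrho: "R1 + R2 \<le> mat_rank F (In_edges E head t1) (Out_edges E tail s1 <+> {..<R2s})
                       (mat_concat H11 (mat_mult F H12 (Out_edges E tail s2) M2))"
  interpret F: field F by (rule field_F)
  let ?O1 = "Out_edges E tail s1" and ?O2 = "Out_edges E tail s2"
  have fO1: "finite ?O1" using net unfolding two_unicast_net_def Out_edges_def by auto
  have cm: "cmat F H11" "cmat F H12" "cmat F H21" "cmat F H22" "cmat F M1" "cmat F M2"
    using H_carrier M_carrier by (auto simp: cmat_def)
  have cmJ: "cmat F (mat_mult F H12 ?O2 M2)" "cmat F (mat_mult F H22 ?O2 M2)"
    using cm by (auto intro: F.cmat_mult)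
  have R1: "R1 \<le> mat_rank F (In_edges E head t1) ?O1 H11" using hR1 rank_H11 by simp
  have R2: "R2 \<le> R2s" using hR2 by (simp add: R2s_def k12_1_def k12_2_def k1_2_def)
  obtain Q P where QP: "Q \<subseteq> ?O1" "card Q = R1" "P \<subseteq> {..<R2s}" "card P = R2"
    and dec1: "decodes_left F (In_edges E head t1) H11 Q (mat_mult F H12 ?O2 M2) P"
    using F.decodable_choice_at_first_terminal[OF finite_F fO1 cm(1) cmJ(1) R1 R2 hrho] by blast
  have dec2: "decodes_left F (In_edges E head t2) (mat_mult F H22 ?O2 M2) P H21 Q"
    using F.decodes_at_second_terminal[OF finite_F fO1 cm(3,5) cmJ(2) _ dec_t2 QP(3,1)] rank_H21
    by (simp add: R1s_def k1_2_def)
  obtain q where q: "bij_betw q {..<R1} Q"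
    using ex_bij_betw_nat_finite[OF finite_subset[OF QP(1) fO1]] QP(2) by (auto simp: atLeast0LessThan)
  obtain p where p: "bij_betw p {..<R2} P"
    using ex_bij_betw_nat_finite[OF finite_subset[OF QP(3)]] QP(4) by (auto simp: atLeast0LessThan)
  have "channel_matrices F E tail head s1 s2 t1 t2 beta H11 H12 H21 H22"
    using H_def unfolding channel_matrices_def .
  from F.selection_code_decodes[OF net cm(1-4,6) this q QP(1) p dec1 dec2]
  show "achievable E tail head s1 s2 t1 t2 R1 R2"
    using M_carrier by (intro achievable_of_decodes[OF field_F finite_F beta_carrier]) auto
qed

end
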